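(* Let $n\ge5$ and let $\Gamma=R_{2n}(n+2,n+1)$. Relabel its vertices by $u_i,v_i,w_i,z_i$ ($i\in\mathbb Z_n$) as follows: $u_i=x_i$ for $0\le i\le n-2$, $u_{n-1}=y_{n-2}$; $v_i=y_{i-1}$ for $1\le i\le n-2$, $v_0=y_{2n-1}$, $v_{n-1}=x_{n-1}$; $w_i=y_{n+i-1}$ for $0\le i\le n-2$, $w_{n-1}=x_{2n-1}$; $z_i=x_{n+i}$ for $0\le i\le n-2$, $z_{n-1}=y_{2n-2}$. For $i\in\mathbb Z_n$ let $\sigma_i=(u_i,v_i)(w_i,z_i)(u_{i+1},w_{i+1})(v_{i+1},z_{i+1})$ (an automorphism of $\Gamma$), let $N=\langle\sigma_0,\ldots,\sigma_{n-1}\rangle$ and $B_i=\{u_i,v_i,w_i,z_i\}$. Each element $t\in N$ fixes every $B_i$ setwise and acts on $B_i$ as one of $1$, $(u_i,v_i)(w_i,z_i)$, $(u_i,w_i)(v_i,z_i)$, $(u_i,z_i)(v_i,w_i)$; write $t=(j_0,\ldots,j_{n-1})$ where $j_i\in\{0,1,2,3\}$ indicates which of these four actions (in this order) $t$ induces on $B_i$. Let $\mathcal M$ be a map of class $2_{\{0,1\}}$ with underlying graph $\Gamma$, and $T=N\cap\mathrm{Aut}(\mathcal M)$. Then either $T=\{(0,0,\ldots,0),(0,1,2,0,1,2,\ldots,0,1,2),(2,0,1,\ldots,2,0,1),(1,2,0,\ldots,1,2,0),(2,1,3,\ldots,2,1,3),(3,2,1,\ldots,3,2,1),(1,3,2,\ldots,1,3,2),(3,3,\ldots,3)\}$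 (each non-constant tuple being the periodic repetition of the displayed block of length $3$), in which case $3\mid n$; or $T=\{(0,0,\ldots,0),(0,1,3,2,\ldots,0,1,3,2),(2,0,1,3,\ldots,2,0,1,3),(3,2,0,1,\ldots,3,2,0,1),(1,3,2,0,\ldots,1,3,2,0),(2,1,2,1,\ldots,2,1),(1,2,1,2,\ldots,1,2),(3,3,\ldots,3)\}$ (periodic repetitions of the displayed blocks), in which case $4\mid n$. In particular, $\gcd(n,12)\ne1$.
   Context: For $m\ge3$, $1\le r\le m-1$ with $r\ne m/2$, and $0\le a\le m-1$, the Rose Window graph $R_m(a,r)$ has vertex set $\{x_i,y_i: i\in\mathbb Z_m\}$ and edges $x_ix_{i+1}$, $y_iy_{i+r}$, $x_iy_i$, $x_iy_{i-a}$ for $i\in\mathbb Z_m$ (indices mod $m$); here $m=2n$ and indices of $x,y$ are mod $2n$. A map is a $2$-cell embedding of a connected simple graph (its underlying graph) in a closed surface; the components of the complement are the faces. All maps considered are polytopal: flags correspond bijectively to incident triples (vertex, edge, face). For a flag $\Phi$ and $i\in\{0,1,2\}$, $\Phi^i$ is the unique flag differing from $\Phi$ exactly in its vertex ($i=0$), edge ($i=1$) or face ($i=2$). $\mathrm{Aut}(\mathcal M)$ is the group of automorphisms of the underlying graph preserving the set of faces. A map is in class $2_{\{0,1\}}$ if $\mathrm{Aut}(\mathcal M)$ has exactly two orbits on flags and for every flag $\Phi$, the flags $\Phi^0,\Phi^1$ lie in the orbit of $\Phi$ while $\Phi^2$ does not. *)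

theory Defs
  imports Main "HOL-Combinatorics.Transposition"
begin

text \<open>Vertices: x_i = (False, i), y_i = (True, i), 0 <= i < m. Edges are 2-element vertex sets.\<close>

definition rw_verts :: "nat \<Rightarrow> (bool \<times> nat) set" where
  "rw_verts m = {(b, i). i < m}"

definition rw_edges :: "nat \<Rightarrow> nat \<Rightarrow> nat \<Rightarrow> (bool \<times> nat) set set" where
  "rw_edges m a r =
     {{(False, i), (False, (i + 1) mod m)} | i. i < m}
   \<union> {{(True, i), (True, (i + r) mod m)} | i. i < m}
   \<union> {{(False, i), (True, i)} | i. i < m}
   \<union> {{(False, i), (True, (i + m - a) mod m)} | i. i < m}"

text \<open>A face of a polytopal map is a closed trail (no repeated edge) of the graph.
  It is encoded by its set of corners; a corner is the 2-set {e, e'} of consecutive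
  edges of the boundary walk (meeting at the vertex in the intersection of e and e').\<close>

definition is_corner :: "'v set set \<Rightarrow> 'v set set \<Rightarrow> bool" where
  "is_corner E c \<longleftrightarrow> (\<exists>e e'. c = {e, e'} \<and> e \<in> E \<and> e' \<in> E \<and> e \<noteq> e' \<and> e \<inter> e' \<noteq> {})"

definition face_edges :: "'v set set set \<Rightarrow> 'v set set" where
  "face_edges f = \<Union> f"

definition is_face :: "'v set set \<Rightarrow> 'v set set set \<Rightarrow> bool" where
  "is_face E f \<longleftrightarrow> f \<noteq> {} \<and> finite f \<and> (\<forall>c\<in>f. is_corner E c)
     \<and> (\<forall>e\<in>face_edges f. \<forall>v\<in>e. card {c\<in>f. e \<in> c \<and> v \<in> \<Inter> c} = 1)
     \<and> (\<forall>c\<in>f. \<forall>d\<in>f. (c, d) \<in> {(c1, c2). c1 \<in> f \<and> c2 \<in> f \<and> c1 \<inter> c2 \<noteq> {}}\<^sup>*)"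

text \<open>A map with underlying graph (V,E): a set of faces such that every edge lies in
  exactly two faces and around every vertex the faces form a single cycle
  (the vertex link is connected), on a connected graph.\<close>

definition graph_connected :: "'v set \<Rightarrow> 'v set set \<Rightarrow> bool" where
  "graph_connected V E \<longleftrightarrow>
     (\<forall>x\<in>V. \<forall>y\<in>V. (x, y) \<in> {(a, b). {a, b} \<in> E}\<^sup>*)"

definition vertex_link :: "'v set set set set \<Rightarrow> 'v \<Rightarrow> ('v set \<times> 'v set) set" where
  "vertex_link F v = {(e, e'). \<exists>f\<in>F. {e, e'} \<in> f \<and> e \<noteq> e' \<and> v \<in> e \<and> v \<in> e'}"

definition is_map :: "'v set \<Rightarrow> 'v set set \<Rightarrow> 'v set set set set \<Rightarrow> bool" where
  "is_map V E F \<longleftrightarrow> finite V \<and> (\<forall>e\<in>E. \<exists>x y. e = {x, y} \<and> x \<noteq> y \<and> x \<in> V \<and> y \<in> V)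
     \<and> graph_connected V E
     \<and> (\<forall>f\<in>F. is_face E f)
     \<and> (\<forall>e\<in>E. card {f\<in>F. e \<in> face_edges f} = 2)
     \<and> (\<forall>v\<in>V. \<forall>e\<in>E. \<forall>e'\<in>E. v \<in> e \<longrightarrow> v \<in> e' \<longrightarrow> (e, e') \<in> (vertex_link F v)\<^sup>*)"

type_synonym 'v flag = "'v \<times> 'v set \<times> 'v set set set"

definition flags :: "'v set set set set \<Rightarrow> 'v flag set" where
  "flags F = {(v, e, f). f \<in> F \<and> e \<in> face_edges f \<and> v \<in> e}"

definition flag0 :: "'v flag \<Rightarrow> 'v flag" where
  "flag0 \<Phi> = (case \<Phi> of (v, e, f) \<Rightarrow> (THE w. w \<in> e \<and> w \<noteq> v, e, f))"

definition flag1 :: "'v flag \<Rightarrow> 'v flag" where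
  "flag1 \<Phi> = (case \<Phi> of (v, e, f) \<Rightarrow> (v, THE e'. {e, e'} \<in> f \<and> e' \<noteq> e \<and> v \<in> e', f))"

definition flag2 :: "'v set set set set \<Rightarrow> 'v flag \<Rightarrow> 'v flag" where
  "flag2 F \<Phi> = (case \<Phi> of (v, e, f) \<Rightarrow> (v, e, THE f'. f' \<in> F \<and> e \<in> face_edges f' \<and> f' \<noteq> f))"

definition img_edge :: "('v \<Rightarrow> 'v) \<Rightarrow> 'v set \<Rightarrow> 'v set" where
  "img_edge g e = g ` e"

definition img_face :: "('v \<Rightarrow> 'v) \<Rightarrow> 'v set set set \<Rightarrow> 'v set set set" where
  "img_face g f = (\<lambda>c. img_edge g ` c) ` f"

text \<open>Aut(M): automorphisms of the underlying graph preserving the set of faces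
  (permutations of V, normalised to be the identity outside V).\<close>

definition map_aut :: "'v set \<Rightarrow> 'v set set \<Rightarrow> 'v set set set set \<Rightarrow> ('v \<Rightarrow> 'v) set" where
  "map_aut V E F = {g. bij_betw g V V \<and> (\<forall>x. x \<notin> V \<longrightarrow> g x = x)
      \<and> img_edge g ` E = E \<and> img_face g ` F = F}"

definition flag_act :: "('v \<Rightarrow> 'v) \<Rightarrow> 'v flag \<Rightarrow> 'v flag" where
  "flag_act g \<Phi> = (case \<Phi> of (v, e, f) \<Rightarrow> (g v, img_edge g e, img_face g f))"

definition flag_orbit :: "'v set \<Rightarrow> 'v set set \<Rightarrow> 'v set set set set \<Rightarrow> 'v flag \<Rightarrow> 'v flag set" where
  "flag_orbit V E F \<Phi> = (\<lambda>g. flag_act g \<Phi>) ` map_aut V E F"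

definition class_2_01 :: "'v set \<Rightarrow> 'v set set \<Rightarrow> 'v set set set set \<Rightarrow> bool" where
  "class_2_01 V E F \<longleftrightarrow> is_map V E F
     \<and> card (flag_orbit V E F ` flags F) = 2
     \<and> (\<forall>\<Phi>\<in>flags F. flag0 \<Phi> \<in> flag_orbit V E F \<Phi> \<and> flag1 \<Phi> \<in> flag_orbit V E F \<Phi>
                      \<and> flag2 F \<Phi> \<notin> flag_orbit V E F \<Phi>)"

definition xv :: "nat \<Rightarrow> bool \<times> nat" where "xv i = (False, i)"
definition yv :: "nat \<Rightarrow> bool \<times> nat" where "yv i = (True, i)"

definition U :: "nat \<Rightarrow> nat \<Rightarrow> bool \<times> nat" where
  "U n i = (if i \<le> n - 2 then xv i else yv (n - 2))"
definition Vv :: "nat \<Rightarrow> nat \<Rightarrow> bool \<times> nat" where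
  "Vv n i = (if i = 0 then yv (2 * n - 1) else if i \<le> n - 2 then yv (i - 1) else xv (n - 1))"
definition W :: "nat \<Rightarrow> nat \<Rightarrow> bool \<times> nat" where
  "W n i = (if i \<le> n - 2 then yv (n + i - 1) else xv (2 * n - 1))"
definition Z :: "nat \<Rightarrow> nat \<Rightarrow> bool \<times> nat" where
  "Z n i = (if i \<le> n - 2 then xv (n + i) else yv (2 * n - 2))"

definition blk :: "nat \<Rightarrow> nat \<Rightarrow> (bool \<times> nat) set" where
  "blk n i = {U n i, Vv n i, W n i, Z n i}"

definition sigma :: "nat \<Rightarrow> nat \<Rightarrow> (bool \<times> nat) \<Rightarrow> (bool \<times> nat)" where
  "sigma n i = transpose (U n i) (Vv n i) \<circ> transpose (W n i) (Z n i)
      \<circ> transpose (U n ((i + 1) mod n)) (W n ((i + 1) mod n))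
      \<circ> transpose (Vv n ((i + 1) mod n)) (Z n ((i + 1) mod n))"

text \<open>N = <sigma_0,...,sigma_{n-1}>; since the generators are involutions of a finite
  set, the generated group is the closure of the identity under left multiplication
  by generators.\<close>
inductive_set Ngrp :: "nat \<Rightarrow> ((bool \<times> nat) \<Rightarrow> (bool \<times> nat)) set" for n where
  Ngrp_id: "id \<in> Ngrp n"
| Ngrp_step: "t \<in> Ngrp n \<Longrightarrow> i < n \<Longrightarrow> sigma n i \<circ> t \<in> Ngrp n"

definition blk_act :: "nat \<Rightarrow> nat \<Rightarrow> nat \<Rightarrow> (bool \<times> nat) \<Rightarrow> (bool \<times> nat)" where
  "blk_act n i k =
    (if k = 1 then transpose (U n i) (Vv n i) \<circ> transpose (W n i) (Z n i)
     else if k = 2 then transpose (U n i) (W n i) \<circ> transpose (Vv n i) (Z n i)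
     else if k = 3 then transpose (U n i) (Z n i) \<circ> transpose (Vv n i) (W n i)
     else id)"

definition elt :: "nat \<Rightarrow> (nat \<Rightarrow> nat) \<Rightarrow> (bool \<times> nat) \<Rightarrow> (bool \<times> nat)" where
  "elt n j = foldr (\<circ>) (map (\<lambda>i. blk_act n i (j i)) [0..<n]) id"

definition per :: "nat list \<Rightarrow> nat \<Rightarrow> nat" where
  "per bs i = bs ! (i mod length bs)"

definition T3 :: "(nat \<Rightarrow> nat) set" where
  "T3 = {per [0], per [0,1,2], per [2,0,1], per [1,2,0], per [2,1,3], per [3,2,1],
         per [1,3,2], per [3]}"

definition T4 :: "(nat \<Rightarrow> nat) set" where
  "T4 = {per [0], per [0,1,3,2], per [2,0,1,3], per [3,2,0,1], per [1,3,2,0], per [2,1],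
         per [1,2], per [3]}"

end

(*
  In the coordinates u, v, w, z the graph is a necklace of n blocks of four vertices: a vertex
  of block k is joined to exactly the two vertices of block k + 1 whose second bit equals its
  first bit. Having two common neighbours characterises the pairs of distinct vertices in one
  block that share a bit, so every graph automorphism permutes the blocks dihedrally and acts
  on the bits by translations, exchanging the two bits when it reverses the cyclic order.
  An element of N is a sequence of bit flips, encoded by an n-periodic binary sequence alpha:
  block k flips its first bit iff alpha k and its second bit iff alpha (k - 1).

  In a map of class 2_{0,1} the automorphism group reverses every edge, the stabiliser of a
  vertex is transitive on its neighbours, and only the identity fixes an edge pointwise.
  Conjugating by such automorphisms shows that the sequences encoding T form a group under
  xor that is closed under the reflections m -> -m and m -> -m - 1, hence under shifts, in
  which three consecutive zeros force the zero sequence, and which contains a sequence with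
  values 0, 0, 1 at -1, 0, 1. Such a group is spanned by the shifts of one sequence obeying
  P (m + 3) = P m + c (P (m + 1) + P (m + 2)) over GF(2): c = 0 gives the sequences of
  period 3, c = 1 those of period 4 with alpha 3 = alpha 0 + alpha 1 + alpha 2, and
  n-periodicity of P forces 3 dvd n, respectively 4 dvd n.
*)

theory Submission
  imports Defs "HOL-Library.Periodic_Fun"
begin

section \<open>Groups of periodic binary sequences\<close>

lemma periodic_mod:
  assumes "periodic_fun_simple f (d :: int)"
  shows "f (m mod d) = f m"
proof -
  interpret periodic_fun_simple f d by fact
  have "m mod d = m - of_int (m div d) * d" by (simp add: minus_div_mult_eq_mod)
  then show ?thesis using minus_of_int by metis
qed

lemma periodic_cong: "periodic_fun_simple f (d :: int) \<Longrightarrow> a mod d = b mod d \<Longrightarrow> f a = f b"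
  by (metis periodic_mod)

lemma periodic_minus: "periodic_fun_simple f d \<Longrightarrow> f (m - d) = f m"
  unfolding periodic_fun_simple_def by (metis diff_add_cancel)

lemma periodic_eqI:
  assumes "periodic_fun_simple f (int p)" "periodic_fun_simple g (int p)" "p > 0"
    and "\<And>k. k < p \<Longrightarrow> f (int k) = g (int k)"
  shows "f = g"
proof
  fix m
  have "m mod int p = int (nat (m mod int p))" "nat (m mod int p) < p"
    using \<open>p > 0\<close> by (simp_all add: nat_less_iff)
  then show "f m = g m" using assms periodic_mod by metis
qed

lemma dvd_if_periodic:
  assumes "periodic_fun_simple f (int n)" "periodic_fun_simple f (int p)" "p > 0"
    and "\<And>k. 0 < k \<Longrightarrow> k < p \<Longrightarrow> \<exists>j. f (j + int k) \<noteq> f j"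
  shows "p dvd n"
proof (rule ccontr)
  assume "\<not> p dvd n"
  then have "0 < n mod p" "n mod p < p" using \<open>p > 0\<close> by (auto simp: dvd_eq_mod_eq_0)
  then obtain j where "f (j + int (n mod p)) \<noteq> f j" using assms(4) by blast
  moreover have "f (j + int (n mod p)) = f (j + int n)"
    by (rule periodic_cong[OF assms(2)]) (simp add: zmod_int mod_add_right_eq)
  moreover have "f (j + int n) = f j"
    using assms(1) unfolding periodic_fun_simple_def by blast
  ultimately show False by simp
qed

locale binary_pattern_group =
  fixes n :: nat and A :: "(int \<Rightarrow> bool) set"
  assumes periodic: "\<alpha> \<in> A \<Longrightarrow> periodic_fun_simple \<alpha> (int n)"
    and xor_closed: "\<alpha> \<in> A \<Longrightarrow> \<gamma> \<in> A \<Longrightarrow> (\<lambda>m. \<alpha> m \<noteq> \<gamma> m) \<in> A"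
    and rigid: "\<alpha> \<in> A \<Longrightarrow> \<not> \<alpha> (k - 1) \<Longrightarrow> \<not> \<alpha> k \<Longrightarrow> \<not> \<alpha> (k + 1) \<Longrightarrow> \<not> \<alpha> m"
    and reflect: "\<alpha> \<in> A \<Longrightarrow> (\<lambda>m. \<alpha> (- m)) \<in> A"
    and reflect': "\<alpha> \<in> A \<Longrightarrow> (\<lambda>m. \<alpha> (- m - 1)) \<in> A"
    and generator: "\<exists>\<beta>\<in>A. \<not> \<beta> (- 1) \<and> \<not> \<beta> 0 \<and> \<beta> 1"
begin

lemma shift_closed:
  assumes "\<alpha> \<in> A"
  shows "(\<lambda>m. \<alpha> (m + d)) \<in> A"
proof -
  have step: "(\<lambda>m. \<gamma> (m + 1)) \<in> A" "(\<lambda>m. \<gamma> (m - 1)) \<in> A" if "\<gamma> \<in> A" for \<gamma>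
    using reflect'[OF reflect[OF that]] reflect[OF reflect'[OF that]]
      by (simp_all add: algebra_simps)
  have "(\<lambda>m. \<alpha> (m + int k)) \<in> A \<and> (\<lambda>m. \<alpha> (m - int k)) \<in> A" for k
  proof (induction k)
    case 0
    then show ?case using assms by simp
  next
    case (Suc k)
    then show ?case using step[of "\<lambda>m. \<alpha> (m + int k)"] step[of "\<lambda>m. \<alpha> (m - int k)"]
      by (simp add: algebra_simps)
  qed
  note shifts = this
  show ?thesis
  proof (cases "d \<ge> 0")
    case True
    then show ?thesis using shifts[of "nat d"] by simp
  next
    case False
    then have "(\<lambda>m. \<alpha> (m + d)) = (\<lambda>m. \<alpha> (m - int (nat (- d))))" by simp
    then show ?thesis using shifts[of "nat (- d)"] by simp
  qed
qed

lemma xor_if_closed: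
  assumes "\<alpha> \<in> A" "\<gamma> \<in> A"
  shows "(\<lambda>m. \<alpha> m \<noteq> (c \<and> \<gamma> m)) \<in> A"
  using assms xor_closed by (cases c) simp_all

lemma zero_mem: "(\<lambda>m. False) \<in> A"
proof -
  obtain \<beta> where "\<beta> \<in> A" using generator by blast
  from xor_closed[OF this this] show ?thesis by simp
qed

lemma eq_if_agree_on_three:
  assumes "\<alpha> \<in> A" "\<gamma> \<in> A" "\<alpha> k = \<gamma> k" "\<alpha> (k + 1) = \<gamma> (k + 1)" "\<alpha> (k + 2) = \<gamma> (k + 2)"
  shows "\<alpha> = \<gamma>"
proof
  fix m
  have "\<not> (\<lambda>m. \<alpha> m \<noteq> \<gamma> m) m"
    by (rule rigid[OF xor_closed[OF assms(1,2)], of "k + 1"])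
      (use assms(3-5) in \<open>simp_all add: algebra_simps\<close>)
  then show "\<alpha> m = \<gamma> m" by simp
qed

definition normal_generator :: "(int \<Rightarrow> bool) \<Rightarrow> bool" where
  "normal_generator P \<longleftrightarrow> P \<in> A \<and> \<not> P 0 \<and> \<not> P 1 \<and> P 2 \<and> (\<lambda>m. P (1 - m)) = P"

lemma normal_generator_exists: obtains P where "normal_generator P"
proof -
  obtain \<beta> where \<beta>: "\<beta> \<in> A" "\<not> \<beta> (- 1)" "\<not> \<beta> 0" "\<beta> 1" using generator by blast
  define P where "P m = \<beta> (m - 1)" for m
  have P: "P \<in> A" "\<not> P 0" "\<not> P 1" "P 2"
    unfolding P_def using shift_closed[OF \<beta>(1), of "- 1"] \<beta> by simp_all
  have "P (- 1)" using rigid[OF P(1), of 0 2] P by auto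
  then have "(\<lambda>m. P (1 - m)) = P"
    using eq_if_agree_on_three[of "\<lambda>m. P (1 - m)" P 0] shift_closed[OF reflect[OF P(1)], of "- 1"] P
    by (simp add: algebra_simps)
  with P show ?thesis using that unfolding normal_generator_def by blast
qed

text \<open>The coefficient \<open>P 3\<close> of this recurrence decides between the two cases of the
  classification.\<close>

lemma normal_generator_recurrence:
  assumes "normal_generator P"
  shows "\<not> P 4" "P (m + 3) = (P m \<noteq> (P 3 \<and> (P (m + 1) \<noteq> P (m + 2))))"
proof -
  have P: "P \<in> A" "\<not> P 0" "\<not> P 1" "P 2" "(\<lambda>m. P (1 - m)) = P"
    using assms unfolding normal_generator_def by blast+
  have sym: "P (- 1) = P 2" "P (- 2) = P 3"
    using fun_cong[OF P(5), of 2] fun_cong[OF P(5), of 3] by simp_all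
  have shifts: "(\<lambda>m. P (m - 1)) \<in> A" "(\<lambda>m. P (m + 1)) \<in> A" "(\<lambda>m. P (m + 2)) \<in> A"
    using shift_closed[OF P(1), of "- 1"] shift_closed[OF P(1), of 1] shift_closed[OF P(1), of 2]
    by simp_all
  define c where "c m \<longleftrightarrow> (P (m - 1) \<noteq> (P 3 \<and> P (m + 1))) \<noteq> ((P 4 \<noteq> P 3) \<and> P m)" for m
  have "c \<in> A"
    unfolding c_def
      using xor_if_closed[OF xor_if_closed[OF shifts(1,2), of "P 3"] P(1), of "P 4 \<noteq> P 3"]
    by simp
  then have c: "(\<lambda>m. P (m + 2)) = c"
    by (intro eq_if_agree_on_three[OF shifts(3), of _ 0]) (use P sym in \<open>auto simp: c_def\<close>)
  from fun_cong[OF c, of "- 1"] show "\<not> P 4" using P sym by (auto simp: c_def)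
  with fun_cong[OF c, of "m + 1"] show "P (m + 3) = (P m \<noteq> (P 3 \<and> (P (m + 1) \<noteq> P (m + 2))))"
    by (auto simp: c_def algebra_simps)
qed

text \<open>The element of \<open>A\<close> with prescribed values \<open>a0, a1, a2\<close> at \<open>0, 1, 2\<close>, written as a
  combination of shifts of a normal generator \<open>P\<close>.\<close>

definition interpolant :: "(int \<Rightarrow> bool) \<Rightarrow> bool \<Rightarrow> bool \<Rightarrow> bool \<Rightarrow> int \<Rightarrow> bool" where
  "interpolant P a0 a1 a2 m \<longleftrightarrow>
     ((a0 \<and> P (m + 2)) \<noteq> ((a1 \<noteq> (P 3 \<and> a0)) \<and> P (m + 1))) \<noteq> ((a2 \<noteq> (P 3 \<and> (a1 \<noteq> a0))) \<and> P m)"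

lemma interpolant_mem:
  assumes "P \<in> A"
  shows "interpolant P a0 a1 a2 \<in> A"
proof -
  have "(\<lambda>m. P (m + 2)) \<in> A" "(\<lambda>m. P (m + 1)) \<in> A" using shift_closed[OF assms] by blast+
  from xor_if_closed[OF xor_if_closed[OF xor_if_closed[OF zero_mem this(1), of a0] this(2),
        of "a1 \<noteq> (P 3 \<and> a0)"] assms, of "a2 \<noteq> (P 3 \<and> (a1 \<noteq> a0))"]
  show ?thesis unfolding interpolant_def by simp
qed

lemma interpolant_periodic:
  assumes "periodic_fun_simple P d"
  shows "periodic_fun_simple (interpolant P a0 a1 a2) d"
proof (rule periodic_fun_simple.intro)
  fix m
  have "P (m + d + j) = P (m + j)" for j
    using periodic_fun_simple.plus_period[OF assms, of "m + j"] by (simp add: ac_simps)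
  from this[of 0] this[of 1] this[of 2]
  show "interpolant P a0 a1 a2 (m + d) = interpolant P a0 a1 a2 m"
    unfolding interpolant_def by simp
qed

lemma interpolant_values:
  assumes "normal_generator P"
  shows "interpolant P a0 a1 a2 0 = a0" "interpolant P a0 a1 a2 1 = a1"
      "interpolant P a0 a1 a2 2 = a2"
  using assms normal_generator_recurrence(1)[OF assms]
  by (auto simp: interpolant_def normal_generator_def)

lemma eq_interpolant:
  assumes "normal_generator P" "\<alpha> \<in> A"
  shows "\<alpha> = interpolant P (\<alpha> 0) (\<alpha> 1) (\<alpha> 2)"
  using assms(1) interpolant_values[OF assms(1)]
  by (intro eq_if_agree_on_three[OF assms(2) interpolant_mem, of _ 0])
    (simp_all add: normal_generator_def)

lemma normal_generator_period_dvd: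
  assumes P: "normal_generator P" and per: "periodic_fun_simple P (int p)"
    and p: "p = 3 \<or> (p = 4 \<and> P 3)"
  shows "p dvd n"
proof (rule dvd_if_periodic[OF periodic per])
  show "P \<in> A" "p > 0" using P p unfolding normal_generator_def by auto
  fix k :: nat assume "0 < k" "k < p"
  then consider "k = 1" | "k = 2 \<or> k = 3" using p by linarith
  then show "\<exists>j. P (j + int k) \<noteq> P j"
  proof cases
    case 1
    show ?thesis using 1 P unfolding normal_generator_def by (auto intro!: exI[of _ 1])
  next
    case 2
    then have "k = 2 \<or> (k = 3 \<and> P 3)" using p \<open>k < p\<close> by auto
    then show ?thesis using P unfolding normal_generator_def by (auto intro!: exI[of _ 0])
  qed
qed

lemma classification_period_3:
  assumes P: "normal_generator P" and P3: "\<not> P 3"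
  shows "A = {\<alpha>. periodic_fun_simple \<alpha> 3}" "3 dvd n"
proof -
  have P_A: "P \<in> A" using P unfolding normal_generator_def by blast
  have P_3: "periodic_fun_simple P (int 3)"
    using normal_generator_recurrence(2)[OF P] P3 by (simp add: periodic_fun_simple_def)
  show "A = {\<alpha>. periodic_fun_simple \<alpha> 3}"
  proof (intro equalityI subsetI CollectI)
    fix \<alpha> assume "\<alpha> \<in> A"
    from interpolant_periodic[OF P_3] show "periodic_fun_simple \<alpha> 3"
      by (subst eq_interpolant[OF P \<open>\<alpha> \<in> A\<close>]) simp
  next
    fix \<gamma> :: "int \<Rightarrow> bool" assume \<gamma>: "\<gamma> \<in> {\<alpha>. periodic_fun_simple \<alpha> 3}"
    have "\<gamma> = interpolant P (\<gamma> 0) (\<gamma> 1) (\<gamma> 2)"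
    proof (rule periodic_eqI[OF _ interpolant_periodic[OF P_3]])
      show "periodic_fun_simple \<gamma> (int 3)" using \<gamma> by simp
      fix k :: nat assume "k < 3"
      then consider "k = 0" | "k = 1" | "k = 2" by linarith
      then show "\<gamma> (int k) = interpolant P (\<gamma> 0) (\<gamma> 1) (\<gamma> 2) (int k)"
        by cases (simp_all add: interpolant_values[OF P])
    qed simp
    then show "\<gamma> \<in> A" by (subst \<open>\<gamma> = _\<close>) (rule interpolant_mem[OF P_A])
  qed
  show "3 dvd n" using normal_generator_period_dvd[OF P P_3] by simp
qed

lemma classification_period_4:
  assumes P: "normal_generator P" and P3: "P 3"
  shows "A = {\<alpha>. periodic_fun_simple \<alpha> 4 \<and> \<alpha> 3 = (\<alpha> 0 \<noteq> (\<alpha> 1 \<noteq> \<alpha> 2))}" "4 dvd n"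
proof -
  note rec = normal_generator_recurrence[OF P]
  have P_A: "P \<in> A" using P unfolding normal_generator_def by blast
  have P_4: "periodic_fun_simple P (int 4)"
  proof (rule periodic_fun_simple.intro)
    fix m
    show "P (m + int 4) = P m"
      using rec(2)[of m] rec(2)[of "m + 1"] P3 by (auto simp: algebra_simps)
  qed
  have "\<not> P 5"
    using periodic_fun_simple.plus_period[OF P_4, of 1] P unfolding normal_generator_def by simp
  then have sum3: "interpolant P a0 a1 a2 3 = (a0 \<noteq> (a1 \<noteq> a2))" for a0 a1 a2
    using P3 rec(1) by (auto simp: interpolant_def)
  show "A = {\<alpha>. periodic_fun_simple \<alpha> 4 \<and> \<alpha> 3 = (\<alpha> 0 \<noteq> (\<alpha> 1 \<noteq> \<alpha> 2))}"
  proof (intro equalityI subsetI CollectI conjI)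
    fix \<alpha> assume "\<alpha> \<in> A"
    from interpolant_periodic[OF P_4] show "periodic_fun_simple \<alpha> 4"
      by (subst eq_interpolant[OF P \<open>\<alpha> \<in> A\<close>]) simp
    show "\<alpha> 3 = (\<alpha> 0 \<noteq> (\<alpha> 1 \<noteq> \<alpha> 2))"
      using sum3 by (subst eq_interpolant[OF P \<open>\<alpha> \<in> A\<close>]) simp
  next
    fix \<gamma> :: "int \<Rightarrow> bool"
    assume \<gamma>: "\<gamma> \<in> {\<alpha>. periodic_fun_simple \<alpha> 4 \<and> \<alpha> 3 = (\<alpha> 0 \<noteq> (\<alpha> 1 \<noteq> \<alpha> 2))}"
    have "\<gamma> = interpolant P (\<gamma> 0) (\<gamma> 1) (\<gamma> 2)"
    proof (rule periodic_eqI[OF _ interpolant_periodic[OF P_4]])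
      show "periodic_fun_simple \<gamma> (int 4)" using \<gamma> by simp
      fix k :: nat assume "k < 4"
      then consider "k = 0" | "k = 1" | "k = 2" | "k = 3" by linarith
      then show "\<gamma> (int k) = interpolant P (\<gamma> 0) (\<gamma> 1) (\<gamma> 2) (int k)"
        using \<gamma> by cases (simp_all add: interpolant_values[OF P] sum3)
    qed simp
    then show "\<gamma> \<in> A" by (subst \<open>\<gamma> = _\<close>) (rule interpolant_mem[OF P_A])
  qed
  show "4 dvd n" using normal_generator_period_dvd[OF P P_4] P3 by simp
qed

theorem classification:
  "(A = {\<alpha>. periodic_fun_simple \<alpha> 3} \<and> 3 dvd n)
   \<or> (A = {\<alpha>. periodic_fun_simple \<alpha> 4 \<and> \<alpha> 3 = (\<alpha> 0 \<noteq> (\<alpha> 1 \<noteq> \<alpha> 2))} \<and> 4 dvd n)"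
proof -
  obtain P where P: "normal_generator P" by (rule normal_generator_exists)
  show ?thesis
  proof (cases "P 3")
    case True
    then show ?thesis using classification_period_4[OF P] by blast
  next
    case False
    then show ?thesis using classification_period_3[OF P] by blast
  qed
qed
end

section \<open>Maps of class \<open>2\<^sub>{\<^sub>0\<^sub>,\<^sub>1\<^sub>}\<close>\<close>

locale polytopal_map =
  fixes V :: "'v set" and E :: "'v set set" and F :: "'v set set set set"
  assumes is_map: "is_map V E F"
begin

abbreviation Aut :: "('v \<Rightarrow> 'v) set" where "Aut \<equiv> map_aut V E F"

lemma is_map_conditions:
  "\<forall>e\<in>E. \<exists>x y. e = {x, y} \<and> x \<noteq> y \<and> x \<in> V \<and> y \<in> V"
  "graph_connected V E"
  "\<forall>f\<in>F. is_face E f"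
  "\<forall>e\<in>E. card {f \<in> F. e \<in> face_edges f} = 2"
  "\<forall>v\<in>V. \<forall>e\<in>E. \<forall>e'\<in>E. v \<in> e \<longrightarrow> v \<in> e' \<longrightarrow> (e, e') \<in> (vertex_link F v)\<^sup>*"
  using is_map unfolding is_map_def by blast+

lemma edge_doubleton: "e \<in> E \<Longrightarrow> \<exists>x y. e = {x, y} \<and> x \<noteq> y \<and> x \<in> V \<and> y \<in> V"
  using is_map_conditions(1) by blast

lemma connected: "x \<in> V \<Longrightarrow> y \<in> V \<Longrightarrow> (x, y) \<in> {(a, b). {a, b} \<in> E}\<^sup>*"
  using is_map_conditions(2) unfolding graph_connected_def by blast

lemma card_edge_faces: "e \<in> E \<Longrightarrow> card {f \<in> F. e \<in> face_edges f} = 2"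
  using is_map_conditions(4) by blast

lemma vertex_link_connected:
  "v \<in> V \<Longrightarrow> e \<in> E \<Longrightarrow> e' \<in> E \<Longrightarrow> v \<in> e \<Longrightarrow> v \<in> e' \<Longrightarrow> (e, e') \<in> (vertex_link F v)\<^sup>*"
  using is_map_conditions(5) by blast

lemma edge_subset: "e \<in> E \<Longrightarrow> x \<in> e \<Longrightarrow> x \<in> V"
  using edge_doubleton by blast

lemma edge_ends_distinct:
  assumes "{x, y} \<in> E"
  shows "x \<noteq> y"
proof
  assume "x = y"
  obtain a b where "{x, y} = {a, b}" "a \<noteq> b" using edge_doubleton[OF assms] by blast
  then show False using \<open>x = y\<close> by (metis insert_absorb2 insert_iff singletonD)
qed

lemma face_conditions:
  assumes "f \<in> F"
  shows "\<forall>c\<in>f. is_corner E c" "\<forall>e\<in>face_edges f. \<forall>v\<in>e. card {c \<in> f. e \<in> c \<and> v \<in> \<Inter>c} = 1"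
proof -
  have "is_face E f" using is_map_conditions(3) assms by blast
  then show "\<forall>c\<in>f. is_corner E c" unfolding is_face_def by (elim conjE)
  from \<open>is_face E f\<close> show "\<forall>e\<in>face_edges f. \<forall>v\<in>e. card {c \<in> f. e \<in> c \<and> v \<in> \<Inter>c} = 1"
    unfolding is_face_def by (elim conjE)
qed

lemma corner_edges:
  assumes "f \<in> F" "c \<in> f"
  shows "\<exists>e e'. c = {e, e'} \<and> e \<in> E \<and> e' \<in> E \<and> e \<noteq> e'"
proof -
  have "is_corner E c" using face_conditions(1)[OF assms(1)] assms(2) by blast
  then show ?thesis unfolding is_corner_def by (elim exE conjE) (intro exI conjI)
qed

lemma corner_unique:
  assumes "f \<in> F" "e \<in> face_edges f" "v \<in> e"
    and "c \<in> f" "e \<in> c" "v \<in> \<Inter>c" and "d \<in> f" "e \<in> d" "v \<in> \<Inter>d"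
  shows "c = d"
proof -
  have "card {c \<in> f. e \<in> c \<and> v \<in> \<Inter>c} = 1"
    using face_conditions(2)[OF assms(1)] assms(2,3) by blast
  then obtain c0 where c0: "{c \<in> f. e \<in> c \<and> v \<in> \<Inter>c} = {c0}" by (rule card_1_singletonE)
  have "c \<in> {c \<in> f. e \<in> c \<and> v \<in> \<Inter>c}" "d \<in> {c \<in> f. e \<in> c \<and> v \<in> \<Inter>c}"
    using assms(4-9) by simp_all
  then show ?thesis unfolding c0 by simp
qed

lemma edge_faces:
  assumes "e \<in> E"
  obtains f1 f2 where "{f \<in> F. e \<in> face_edges f} = {f1, f2}" "f1 \<noteq> f2"
  using card_edge_faces[OF assms] by (meson card_2_iff)

lemma edge_in_face:
  assumes "e \<in> E"
  obtains f where "f \<in> F" "e \<in> face_edges f"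
proof -
  obtain f1 f2 where "{f \<in> F. e \<in> face_edges f} = {f1, f2}" by (rule edge_faces[OF assms])
  then have "f1 \<in> {f \<in> F. e \<in> face_edges f}" by simp
  then show ?thesis using that by blast
qed

lemma vertex_linkE:
  assumes "(e1, e2) \<in> vertex_link F v"
  obtains f where "f \<in> F" "{e1, e2} \<in> f" "e1 \<noteq> e2" "v \<in> e1" "v \<in> e2" "e1 \<in> E" "e2 \<in> E"
proof -
  obtain f where f: "f \<in> F" "{e1, e2} \<in> f" "e1 \<noteq> e2" "v \<in> e1" "v \<in> e2"
    using assms unfolding vertex_link_def by blast
  obtain a b where ab: "{e1, e2} = {a, b}" "a \<in> E" "b \<in> E"
    using corner_edges[OF f(1,2)] by metis
  have "e1 \<in> {a, b}" "e2 \<in> {a, b}" using ab(1) by (metis insertI1, metis insertI1 insert_commute)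
  then have "e1 \<in> E" "e2 \<in> E" using ab by auto
  then show ?thesis using that f by blast
qed

lemma img_edge_doubleton: "img_edge g {a, b} = {g a, g b}"
  unfolding img_edge_def by simp

lemma img_edge_in_face_edges: "e \<in> face_edges f \<Longrightarrow> img_edge g e \<in> face_edges (img_face g f)"
  unfolding face_edges_def img_face_def by blast

lemma aut_face: "g \<in> Aut \<Longrightarrow> f \<in> F \<Longrightarrow> img_face g f \<in> F"
  unfolding map_aut_def by blast

lemma aut_id: "id \<in> Aut"
proof -
  have e: "img_edge id = id" and f: "img_face id = id" unfolding img_face_def img_edge_def by auto
  show ?thesis unfolding map_aut_def by (simp add: e f)
qed

lemma aut_comp:
  assumes g: "g \<in> Aut" and h: "h \<in> Aut"
  shows "g \<circ> h \<in> Aut"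
proof -
  have e: "img_edge (g \<circ> h) = img_edge g \<circ> img_edge h"
    unfolding img_edge_def by (auto simp: image_comp)
  have f: "img_face (g \<circ> h) = img_face g \<circ> img_face h"
    unfolding img_face_def e by (auto simp: image_comp)
  have g1: "bij_betw g V V" "img_edge g ` E = E" "img_face g ` F = F" "\<forall>x. x \<notin> V \<longrightarrow> g x = x"
    using g unfolding map_aut_def by auto
  have h1: "bij_betw h V V" "img_edge h ` E = E" "img_face h ` F = F" "\<forall>x. x \<notin> V \<longrightarrow> h x = x"
    using h unfolding map_aut_def by auto
  have "img_edge (g \<circ> h) ` E = E" "img_face (g \<circ> h) ` F = F"
    unfolding e f image_comp[symmetric] using g1 h1 by simp_all
  moreover have "bij_betw (g \<circ> h) V V" by (rule bij_betw_trans[OF h1(1) g1(1)])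
  ultimately show ?thesis unfolding map_aut_def using g1 h1 by simp
qed

definition aut_inv :: "('v \<Rightarrow> 'v) \<Rightarrow> 'v \<Rightarrow> 'v" where
  "aut_inv g x = (if x \<in> V then inv_into V g x else x)"

lemma aut_inv:
  assumes g: "g \<in> Aut"
  shows "aut_inv g \<in> Aut" and "g \<circ> aut_inv g = id"
proof -
  have b: "bij_betw g V V" and ie: "img_edge g ` E = E" and if': "img_face g ` F = F"
    and out: "\<And>x. x \<notin> V \<Longrightarrow> g x = x" using g unfolding map_aut_def by auto
  have gv: "\<And>x. x \<in> V \<Longrightarrow> g x \<in> V" using b bij_betwE by blast
  have l: "\<And>x. x \<in> V \<Longrightarrow> aut_inv g (g x) = x" unfolding aut_inv_def using b gv
    by (simp add: bij_betw_inv_into_left)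
  have r: "\<And>x. x \<in> V \<Longrightarrow> g (aut_inv g x) = x" unfolding aut_inv_def using b
    by (simp add: bij_betw_inv_into_right)
  show "g \<circ> aut_inv g = id"
  proof
    fix x show "(g \<circ> aut_inv g) x = id x" using r out by (cases "x \<in> V") (auto simp: aut_inv_def)
  qed
  have bi: "bij_betw (aut_inv g) V V"
  proof -
    have "bij_betw (inv_into V g) V V" using b by (rule bij_betw_inv_into)
    moreover have "\<And>x. x \<in> V \<Longrightarrow> aut_inv g x = inv_into V g x" unfolding aut_inv_def by simp
    ultimately show ?thesis using bij_betw_cong by blast
  qed
  have le: "img_edge (aut_inv g) (img_edge g e) = e" if e: "e \<in> E" for e
  proof -
    have "e \<subseteq> V" using edge_subset e by blast
    then show ?thesis unfolding img_edge_def using l by (force simp: image_comp)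
  qed
  have lf: "img_face (aut_inv g) (img_face g f) = f" if f: "f \<in> F" for f
  proof -
    have "\<forall>c\<in>f. \<forall>e\<in>c. e \<in> E" using corner_edges[OF f] by blast
    then have "\<forall>c\<in>f. img_edge (aut_inv g) ` (img_edge g ` c) = c"
      using le by (force simp: image_comp)
    then show ?thesis unfolding img_face_def by (force simp: image_comp)
  qed
  have "img_edge (aut_inv g) ` E = img_edge (aut_inv g) ` img_edge g ` E" using ie by simp
  also have "\<dots> = E" using le by (force simp: image_comp)
  finally have "img_edge (aut_inv g) ` E = E" .
  moreover have "img_face (aut_inv g) ` F = img_face (aut_inv g) ` img_face g ` F" using if' by simp
  moreover have "\<dots> = F" using lf by (force simp: image_comp)
  ultimately show "aut_inv g \<in> Aut" unfolding map_aut_def using bi by (auto simp: aut_inv_def)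
qed

lemma flag0_edge: "x \<noteq> y \<Longrightarrow> flag0 (x, {x, y}, f) = (y, {x, y}, f)"
  unfolding flag0_def by (auto intro: the_equality)

lemma flag1_corner:
  assumes f: "f \<in> F" and c: "{e1, e2} \<in> f" and ne: "e1 \<noteq> e2" and x: "x \<in> e1" "x \<in> e2"
  shows "flag1 (x, e1, f) = (x, e2, f)"
proof -
  have fe: "e1 \<in> face_edges f" using c unfolding face_edges_def by blast
  have "(THE e'. {e1, e'} \<in> f \<and> e' \<noteq> e1 \<and> x \<in> e') = e2"
  proof (rule the_equality)
    show "{e1, e2} \<in> f \<and> e2 \<noteq> e1 \<and> x \<in> e2" using c ne x by auto
  next
    fix e' assume h: "{e1, e'} \<in> f \<and> e' \<noteq> e1 \<and> x \<in> e'"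
    have "{e1, e'} = {e1, e2}" by (rule corner_unique[OF f fe x(1)]) (use h c x in auto)
    then show "e' = e2" using h ne by (metis doubleton_eq_iff)
  qed
  then show ?thesis unfolding flag1_def by simp
qed

lemma flag2_other_face:
  assumes e: "e \<in> E" and f: "f \<in> F" "e \<in> face_edges f" and f': "f' \<in> F" "e \<in> face_edges f'"
    and ne: "f \<noteq> f'"
  shows "flag2 F (x, e, f) = (x, e, f')"
proof -
  obtain f1 f2 where S: "{f \<in> F. e \<in> face_edges f} = {f1, f2}" by (rule edge_faces[OF e])
  have "(THE f''. f'' \<in> F \<and> e \<in> face_edges f'' \<and> f'' \<noteq> f) = f'"
  proof (rule the_equality)
    show "f' \<in> F \<and> e \<in> face_edges f' \<and> f' \<noteq> f" using f' ne by simp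
  next
    fix f'' assume h: "f'' \<in> F \<and> e \<in> face_edges f'' \<and> f'' \<noteq> f"
    have "f \<in> {f1, f2}" "f' \<in> {f1, f2}" "f'' \<in> {f1, f2}" using S f f' h by blast+
    then show "f'' = f'" using h ne by blast
  qed
  then show ?thesis unfolding flag2_def by simp
qed

lemma orbit_aut:
  assumes "\<Psi> \<in> flag_orbit V E F (v, e, f)"
  obtains g where "g \<in> Aut" "\<Psi> = (g v, img_edge g e, img_face g f)"
  using assms unfolding flag_orbit_def flag_act_def by auto

end

locale map_2_01 =
  fixes V :: "'v set" and E :: "'v set set" and F :: "'v set set set set"
  assumes class_2_01: "class_2_01 V E F"

sublocale map_2_01 \<subseteq> polytopal_map
  using class_2_01 by unfold_locales (simp add: class_2_01_def)

context map_2_01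
begin

lemma flag_in_orbit:
  assumes "\<Phi> \<in> flags F"
  shows "flag0 \<Phi> \<in> flag_orbit V E F \<Phi>" "flag1 \<Phi> \<in> flag_orbit V E F \<Phi>"
    and "flag2 F \<Phi> \<notin> flag_orbit V E F \<Phi>"
  using class_2_01 assms unfolding class_2_01_def by blast+

lemma aut_reverses_edge:
  assumes e: "{x, y} \<in> E"
  obtains g where "g \<in> Aut" "g x = y" "g y = x"
proof -
  obtain f where f: "f \<in> F" "{x, y} \<in> face_edges f" by (rule edge_in_face[OF e])
  have ne: "x \<noteq> y" by (rule edge_ends_distinct[OF e])
  have "(x, {x, y}, f) \<in> flags F" using f unfolding flags_def by simp
  from flag_in_orbit(1)[OF this] obtain g where g: "g \<in> Aut" "g x = y" "img_edge g {x, y} = {x, y}"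
    unfolding flag0_edge[OF ne] by (elim orbit_aut) auto
  then have "{y, g y} = {x, y}" by (simp add: img_edge_doubleton)
  then have "g y = x" using ne by (metis doubleton_eq_iff)
  then show ?thesis using that g by blast
qed

lemma aut_vertex_stabiliser_transitive:
  assumes x: "x \<in> V" and e: "{x, y} \<in> E" and e': "{x, y'} \<in> E"
  obtains g where "g \<in> Aut" "g x = x" "g y = y'"
proof -
  have "\<exists>g\<in>Aut. g x = x \<and> img_edge g {x, y} = e''" if "({x, y}, e'') \<in> (vertex_link F x)\<^sup>*" for e''
    using that
  proof (induction rule: rtrancl_induct)
    case base
    show ?case by (rule bexI[OF _ aut_id]) (simp add: img_edge_def)
  next
    case (step e1 e2)
    obtain g where g: "g \<in> Aut" "g x = x" "img_edge g {x, y} = e1" using step.IH by blast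
    obtain f where f: "f \<in> F" "{e1, e2} \<in> f" "e1 \<noteq> e2" "x \<in> e1" "x \<in> e2"
      by (rule vertex_linkE[OF step.hyps(2)])
    have "(x, e1, f) \<in> flags F" using f unfolding flags_def face_edges_def by blast
    from flag_in_orbit(2)[OF this] obtain h where h: "h \<in> Aut" "h x = x" "img_edge h e1 = e2"
      unfolding flag1_corner[OF f] by (elim orbit_aut) auto
    have "img_edge (h \<circ> g) {x, y} = e2"
      using g h unfolding img_edge_def by (auto simp: image_comp[symmetric])
    moreover have "(h \<circ> g) x = x" using g h by simp
    ultimately show ?case using aut_comp[OF h(1) g(1)] by blast
  qed
  then obtain g where g: "g \<in> Aut" "g x = x" "img_edge g {x, y} = {x, y'}"
    using vertex_link_connected[OF x e e'] by blast
  then have "{x, g y} = {x, y'}" by (simp add: img_edge_doubleton)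
  then have "g y = y'" using edge_ends_distinct[OF e'] by (metis doubleton_eq_iff)
  then show ?thesis using that g by blast
qed

lemma aut_fixing_flag_fixes_face:
  assumes g: "g \<in> Aut" and e: "e \<in> E" and x: "x \<in> e" and gx: "g x = x" and ge: "img_edge g e = e"
    and f: "f \<in> F" "e \<in> face_edges f"
  shows "img_face g f = f"
proof (rule ccontr)
  assume ne: "img_face g f \<noteq> f"
  have f': "img_face g f \<in> F" "e \<in> face_edges (img_face g f)"
    using aut_face[OF g f(1)] img_edge_in_face_edges[OF f(2), of g] ge by auto
  have fl: "(x, e, f) \<in> flags F" using f x unfolding flags_def by simp
  have "flag2 F (x, e, f) = (x, e, img_face g f)"
    by (rule flag2_other_face[OF e f f']) (use ne in auto)
  moreover have "flag_act g (x, e, f) = (x, e, img_face g f)" unfolding flag_act_def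
    using gx ge by simp
  then have "(x, e, img_face g f) \<in> flag_orbit V E F (x, e, f)"
    unfolding flag_orbit_def by (rule image_eqI[OF sym g])
  ultimately show False using flag_in_orbit(3)[OF fl] by simp
qed

lemma aut_fixing_edge_fixes_nbrs:
  assumes g: "g \<in> Aut" and e: "{x, y} \<in> E" and gx: "g x = x" and gy: "g y = y" and w: "{x, w} \<in> E"
  shows "g w = w"
proof -
  have "img_edge g e'' = e''" if "({x, y}, e'') \<in> (vertex_link F x)\<^sup>*" for e''
    using that
  proof (induction rule: rtrancl_induct)
    case base
    show ?case using gx gy by (simp add: img_edge_doubleton)
  next
    case (step e1 e2)
    obtain f where f: "f \<in> F" "{e1, e2} \<in> f" "e1 \<noteq> e2" "x \<in> e1" "x \<in> e2" "e1 \<in> E"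
      by (rule vertex_linkE[OF step.hyps(2)])
    have fe: "e1 \<in> face_edges f" using f(2) unfolding face_edges_def by blast
    have "img_face g f = f" by (rule aut_fixing_flag_fixes_face[OF g f(6,4) gx step.IH f(1) fe])
    moreover have "img_edge g ` {e1, e2} \<in> img_face g f"
      using f(2) unfolding img_face_def by (rule imageI)
    ultimately have c': "{e1, img_edge g e2} \<in> f" using step.IH by simp
    have "x \<in> img_edge g e2" using f(5) gx unfolding img_edge_def by force
    then have "{e1, img_edge g e2} = {e1, e2}"
      by (intro corner_unique[OF f(1) fe f(4) c' _ _ f(2)]) (use f in auto)
    then show ?case using f(3) by (metis doubleton_eq_iff)
  qed
  then have "img_edge g {x, w} = {x, w}"
    using vertex_link_connected[OF edge_subset[OF e] e w] by simp
  then have "{x, g w} = {x, w}" using gx by (simp add: img_edge_doubleton)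
  then show ?thesis using edge_ends_distinct[OF w] by (metis doubleton_eq_iff)
qed

lemma aut_fixing_edge_fixes_vertices:
  assumes g: "g \<in> Aut" and e: "{x, y} \<in> E" and gx: "g x = x" and gy: "g y = y" and z: "z \<in> V"
  shows "g z = z"
proof -
  define S where "S = {v \<in> V. g v = v \<and> (\<forall>w. {v, w} \<in> E \<longrightarrow> g w = w)}"
  have xV: "x \<in> V" using edge_subset[OF e] by simp
  have "x \<in> S" unfolding S_def using xV gx aut_fixing_edge_fixes_nbrs[OF g e gx gy] by blast
  have "(x, z) \<in> {(a, b). {a, b} \<in> E}\<^sup>*" by (rule connected[OF xV z])
  then have "z \<in> S"
  proof (induction rule: rtrancl_induct)
    case base
    show ?case by fact
  next
    case (step a b)
    have ab: "{a, b} \<in> E" using step.hyps(2) by simp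
    have ga: "g a = a" and gb: "g b = b" using step.IH ab unfolding S_def by blast+
    have "{b, a} \<in> E" using ab by (simp add: insert_commute)
    then show ?case unfolding S_def
      using gb aut_fixing_edge_fixes_nbrs[OF g _ gb ga] edge_subset by blast
  qed
  then show ?thesis unfolding S_def by blast
qed

end

section \<open>Block coordinates on \<open>R\<^sub>2\<^sub>n(n + 2, n + 1)\<close>\<close>

lemma rw_edge_rim_iff:
  "{(False, i), (False, j)} \<in> rw_edges m a r \<longleftrightarrow>
     (i < m \<and> j = (i + 1) mod m) \<or> (j < m \<and> i = (j + 1) mod m)"
  unfolding rw_edges_def by (auto simp: doubleton_eq_iff)

lemma rw_edge_hub_iff:
  "{(True, i), (True, j)} \<in> rw_edges m a r \<longleftrightarrow>
     (i < m \<and> j = (i + r) mod m) \<or> (j < m \<and> i = (j + r) mod m)"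
  unfolding rw_edges_def by (auto simp: doubleton_eq_iff)

lemma rw_edge_spoke_iff:
  "{(False, i), (True, j)} \<in> rw_edges m a r \<longleftrightarrow> i < m \<and> (j = i \<or> j = (i + m - a) mod m)"
  unfolding rw_edges_def by (auto simp: doubleton_eq_iff)

lemma rw_edge_spoke_iff':
  "{(True, j), (False, i)} \<in> rw_edges m a r \<longleftrightarrow> i < m \<and> (j = i \<or> j = (i + m - a) mod m)"
  using rw_edge_spoke_iff by (simp add: insert_commute)

lemmas rw_edge_iff = rw_edge_rim_iff rw_edge_hub_iff rw_edge_spoke_iff rw_edge_spoke_iff'

lemma mod_eq_diff: "(b :: nat) \<le> a \<Longrightarrow> a < 2 * b \<Longrightarrow> a mod b = a - b"
  by (simp add: le_mod_geq)

lemma foldr_comp: "foldr (\<circ>) xs g = foldr (\<circ>) xs id \<circ> g"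
  by (induction xs) (auto simp: comp_assoc)

locale rw_blocks =
  fixes n :: nat
  assumes n_ge_5: "n \<ge> 5"
begin

abbreviation Verts :: "(bool \<times> nat) set" where "Verts \<equiv> rw_verts (2 * n)"
abbreviation Edges :: "(bool \<times> nat) set set" where "Edges \<equiv> rw_edges (2 * n) (n + 2) (n + 1)"

text \<open>The first bit \<open>nbit\<close> is the one shared with the neighbours in the next block, the second
  bit \<open>pbit\<close> the one shared with the neighbours in the previous block.\<close>

definition vtx :: "nat \<Rightarrow> bool \<Rightarrow> bool \<Rightarrow> bool \<times> nat" where
  "vtx k a b = (if a then (if b then Z n k else Vv n k) else (if b then W n k else U n k))"

definition blk_of :: "bool \<times> nat \<Rightarrow> nat" where
  "blk_of x = (case x of
      (False, i) \<Rightarrow> if i < n then i else i - n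
    | (True, i) \<Rightarrow> if i \<le> n - 2 then i + 1 else if i \<le> 2 * n - 2 then i + 1 - n else 0)"

definition nbit :: "bool \<times> nat \<Rightarrow> bool" where
  "nbit x = (case x of
      (False, i) \<Rightarrow> n - 1 \<le> i \<and> i \<le> 2 * n - 2
    | (True, i) \<Rightarrow> \<not> (n - 2 \<le> i \<and> i \<le> 2 * n - 3))"

definition pbit :: "bool \<times> nat \<Rightarrow> bool" where
  "pbit x = (case x of
      (False, i) \<Rightarrow> n \<le> i
    | (True, i) \<Rightarrow> n - 1 \<le> i \<and> i \<le> 2 * n - 2)"

lemma n_cases: obtains m where "n = m + 5"
  using n_ge_5 by (metis add.commute le_Suc_ex)

lemmas vtx_defs = vtx_def U_def Vv_def W_def Z_def xv_def yv_def

lemmas coord_defs = blk_of_def nbit_def pbit_def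

lemma vtx_coords:
  assumes "k < n"
  shows vtx_in_Verts: "vtx k a b \<in> Verts" and blk_of_vtx: "blk_of (vtx k a b) = k"
    and nbit_vtx: "nbit (vtx k a b) = a" and pbit_vtx: "pbit (vtx k a b) = b"
proof -
  obtain m where m: "n = m + 5" by (rule n_cases)
  show "vtx k a b \<in> Verts" "blk_of (vtx k a b) = k" "nbit (vtx k a b) = a" "pbit (vtx k a b) = b"
    using assms unfolding vtx_defs coord_defs rw_verts_def by (cases a; cases b; auto simp: m)+
qed

lemma vtx_of_coords:
  assumes "x \<in> Verts"
  shows "vtx (blk_of x) (nbit x) (pbit x) = x"
proof -
  obtain m where m: "n = m + 5" by (rule n_cases)
  obtain b i where x: "x = (b, i)" and i: "i < 2 * n" using assms by (auto simp: rw_verts_def)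
  have "i < n - 2 \<or> i = n - 2 \<or> i = n - 1 \<or> (n \<le> i \<and> i < 2 * n - 2) \<or> i = 2 * n - 2 \<or> i = 2 * n - 1"
    using i by linarith
  then show ?thesis unfolding x vtx_defs coord_defs by (cases b; elim disjE; auto simp: m)
qed

lemma blk_of_lt:
  assumes "x \<in> Verts"
  shows "blk_of x < n"
proof -
  obtain m where m: "n = m + 5" by (rule n_cases)
  show ?thesis using assms unfolding rw_verts_def blk_of_def by (auto simp: m split: bool.splits)
qed

lemma vtx0_coords:
  "vtx 0 False False \<in> Verts" "blk_of (vtx 0 False False) = 0"
  "nbit (vtx 0 False False) = False" "pbit (vtx 0 False False) = False"
  using n_ge_5 vtx_in_Verts blk_of_vtx nbit_vtx pbit_vtx by auto

definition nxt :: "nat \<Rightarrow> nat" where "nxt k = Suc k mod n"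
definition prv :: "nat \<Rightarrow> nat" where "prv k = (k + n - 1) mod n"

lemma nxt_lt [simp]: "nxt k < n"
  using n_ge_5 unfolding nxt_def by simp

lemma prv_lt [simp]: "prv k < n"
  using n_ge_5 unfolding prv_def by simp

lemma nxt_prv [simp]: "k < n \<Longrightarrow> nxt (prv k) = k"
  using n_ge_5 unfolding nxt_def prv_def by (cases "k = 0") (auto simp: mod_Suc le_mod_geq)

lemma prv_nxt [simp]: "k < n \<Longrightarrow> prv (nxt k) = k"
  using n_ge_5 unfolding nxt_def prv_def by (cases "Suc k = n") (auto simp: mod_Suc le_mod_geq)

lemma nxt_inj: "k < n \<Longrightarrow> j < n \<Longrightarrow> nxt k = nxt j \<Longrightarrow> k = j"
  by (metis prv_nxt)

lemma prv_inj: "k < n \<Longrightarrow> j < n \<Longrightarrow> prv k = prv j \<Longrightarrow> k = j"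
  by (metis nxt_prv)

lemma nxt_Suc: "k + 1 < n \<Longrightarrow> nxt k = k + 1"
  unfolding nxt_def by simp

lemma nxt_0: "nxt 0 = 1"
  using n_ge_5 nxt_Suc[of 0] by simp

lemma prv_0: "prv 0 = n - 1"
  using n_ge_5 unfolding prv_def by simp

lemma nxt_last: "nxt (n - 1) = 0"
  using n_ge_5 unfolding nxt_def by simp

lemma nxt_neq: "k < n \<Longrightarrow> nxt k \<noteq> k"
  using n_ge_5 unfolding nxt_def by (cases "Suc k = n") auto

lemma nxt_neq_prv: "k < n \<Longrightarrow> nxt k \<noteq> prv k"
  using n_ge_5
    unfolding nxt_def prv_def by (cases "Suc k = n"; cases "k = 0") (auto simp: le_mod_geq)

lemma nxt_nxt_neq: "k < n \<Longrightarrow> nxt (nxt k) \<noteq> k"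
  by (metis nxt_lt nxt_neq_prv prv_nxt)

lemma nxt_mod_int: "int (nxt j) mod int n = (int j + 1) mod int n"
  unfolding nxt_def by (simp add: zmod_int of_nat_mod add.commute)

lemma prv_mod_int: "int (prv j) mod int n = (int j - 1) mod int n"
proof -
  have "int (prv j) = (int j - 1 + int n) mod int n"
    unfolding prv_def using n_ge_5 by (simp add: zmod_int of_nat_diff algebra_simps)
  then show ?thesis by simp
qed

lemma nxt_nxt_neq_prv_prv:
  assumes "k < n"
  shows "nxt (nxt k) \<noteq> prv (prv k)"
proof
  assume "nxt (nxt k) = prv (prv k)"
  then have "(int k + 2) mod int n = (int k - 2) mod int n"
    using nxt_mod_int[of "nxt k"] nxt_mod_int[of k] prv_mod_int[of k] prv_mod_int[of "prv k"]
    by (simp add: mod_simps add.assoc diff_diff_eq)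
  then have "int n dvd 4" by (simp add: mod_eq_dvd_iff)
  then show False using n_ge_5 zdvd_imp_le[of "int n"] by fastforce
qed

lemma vtx_edge:
  assumes k: "k < n"
  shows "{vtx k a b, vtx (nxt k) a' a} \<in> Edges"
proof -
  obtain m where m: "n = m + 5" by (rule n_cases)
  consider "k = 0" | "0 < k \<and> k \<le> n - 3" | "k = n - 2" | "k = n - 1" using k by linarith
  then have "(k = 0 \<and> nxt k = 1) \<or> (0 < k \<and> k \<le> n - 3 \<and> nxt k = k + 1)
      \<or> (k = n - 2 \<and> nxt k = n - 1) \<or> (k = n - 1 \<and> nxt k = 0)"
    using nxt_Suc nxt_last n_ge_5 by cases auto
  then show ?thesis unfolding vtx_defs
    by (elim disjE conjE; cases a; cases a'; cases b;
        auto simp: m mod_eq_diff rw_edge_iff insert_commute)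
qed

definition fwd_adj :: "bool \<times> nat \<Rightarrow> bool \<times> nat \<Rightarrow> bool" where
  "fwd_adj x y \<longleftrightarrow> blk_of y = nxt (blk_of x) \<and> pbit y = nbit x"

lemma index_cases:
  assumes "i < 2 * n"
  obtains "i = 0" | "i = 1" | "2 \<le> i \<and> i \<le> n - 4" | "i = n - 3" | "i = n - 2" | "i = n - 1"
    | "i = n" | "i = n + 1" | "n + 2 \<le> i \<and> i \<le> 2 * n - 4" | "i = 2 * n - 3" | "i = 2 * n - 2"
    | "i = 2 * n - 1"
proof -
  consider "i \<le> n - 4" | "n - 4 < i \<and> i \<le> n + 1" | "n + 1 < i" by linarith
  then show ?thesis
  proof cases
    case 1
    then have "i = 0 \<or> i = 1 \<or> (2 \<le> i \<and> i \<le> n - 4)" by linarith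
    then show ?thesis using that by blast
  next
    case 2
    then have "i = n - 3 \<or> i = n - 2 \<or> i = n - 1 \<or> i = n \<or> i = n + 1" using n_ge_5 by linarith
    then show ?thesis using that by blast
  next
    case 3
    then have "(n + 2 \<le> i \<and> i \<le> 2 * n - 4) \<or> i = 2 * n - 3 \<or> i = 2 * n - 2 \<or> i = 2 * n - 1"
      using assms n_ge_5 by linarith
    then show ?thesis using that by blast
  qed
qed

lemma rw_edges_fwd_adj:
  assumes i: "i < 2 * n"
  shows "fwd_adj (False, i) (False, (i + 1) mod (2 * n))
      \<or> fwd_adj (False, (i + 1) mod (2 * n)) (False, i)"
    and "fwd_adj (True, i) (True, (i + (n + 1)) mod (2 * n))
      \<or> fwd_adj (True, (i + (n + 1)) mod (2 * n)) (True, i)"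
    and "fwd_adj (False, i) (True, i) \<or> fwd_adj (True, i) (False, i)"
    and "fwd_adj (False, i) (True, (i + 2 * n - (n + 2)) mod (2 * n))
      \<or> fwd_adj (True, (i + 2 * n - (n + 2)) mod (2 * n)) (False, i)"
proof -
  obtain m where m: "n = m + 5" by (rule n_cases)
  note defs = fwd_adj_def coord_defs nxt_def
  show "fwd_adj (False, i) (False, (i + 1) mod (2 * n))
      \<or> fwd_adj (False, (i + 1) mod (2 * n)) (False, i)"
    using i by (rule index_cases) (unfold defs, auto simp: m mod_eq_diff)
  show "fwd_adj (True, i) (True, (i + (n + 1)) mod (2 * n))
      \<or> fwd_adj (True, (i + (n + 1)) mod (2 * n)) (True, i)"
    using i by (rule index_cases) (unfold defs, auto simp: m mod_eq_diff)
  show "fwd_adj (False, i) (True, i) \<or> fwd_adj (True, i) (False, i)"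
    using i by (rule index_cases) (unfold defs, auto simp: m mod_eq_diff)
  show "fwd_adj (False, i) (True, (i + 2 * n - (n + 2)) mod (2 * n))
      \<or> fwd_adj (True, (i + 2 * n - (n + 2)) mod (2 * n)) (False, i)"
    using i by (rule index_cases) (unfold defs, auto simp: m mod_eq_diff)
qed

lemma coords_eqI:
  assumes "x \<in> Verts" "y \<in> Verts" "blk_of x = blk_of y" "nbit x = nbit y" "pbit x = pbit y"
  shows "x = y"
proof -
  have "x = vtx (blk_of x) (nbit x) (pbit x)" using vtx_of_coords[OF assms(1)] by simp
  also have "\<dots> = y" using assms(3-5) vtx_of_coords[OF assms(2)] by simp
  finally show ?thesis .
qed

lemma Edges_fwd_adjE:
  assumes "e \<in> Edges"
  obtains p q where "e = {p, q}" "p \<in> Verts" "q \<in> Verts" "fwd_adj p q \<or> fwd_adj q p"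
proof -
  from assms obtain i where i: "i < 2 * n" and
    "e = {(False, i), (False, (i + 1) mod (2 * n))}
     \<or> e = {(True, i), (True, (i + (n + 1)) mod (2 * n))}
     \<or> e = {(False, i), (True, i)}
     \<or> e = {(False, i), (True, (i + 2 * n - (n + 2)) mod (2 * n))}"
    unfolding rw_edges_def by blast
  moreover have "j mod (2 * n) < 2 * n" for j using n_ge_5 by simp
  ultimately show ?thesis using i rw_edges_fwd_adj[OF i] that unfolding rw_verts_def by blast
qed

lemma edge_iff_fwd_adj:
  assumes x: "x \<in> Verts" and y: "y \<in> Verts"
  shows "{x, y} \<in> Edges \<longleftrightarrow> fwd_adj x y \<or> fwd_adj y x"
proof
  assume "{x, y} \<in> Edges"
  then obtain p q where "{x, y} = {p, q}" "fwd_adj p q \<or> fwd_adj q p" by (rule Edges_fwd_adjE)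
  then show "fwd_adj x y \<or> fwd_adj y x" by (auto simp: doubleton_eq_iff)
next
  have fwd: "{p, q} \<in> Edges" if p: "p \<in> Verts" and q: "q \<in> Verts" and "fwd_adj p q" for p q
  proof -
    have "p = vtx (blk_of p) (nbit p) (pbit p)" using vtx_of_coords[OF p] by simp
    moreover have "q = vtx (nxt (blk_of p)) (nbit q) (nbit p)"
      using vtx_of_coords[OF q] \<open>fwd_adj p q\<close> unfolding fwd_adj_def by simp
    ultimately show ?thesis using vtx_edge[OF blk_of_lt[OF p]] by metis
  qed
  assume "fwd_adj x y \<or> fwd_adj y x"
  then show "{x, y} \<in> Edges" using fwd[OF x y] fwd[OF y x] by (auto simp: insert_commute)
qed

lemma fwd_adj_iff_prv:
  assumes "x \<in> Verts" "y \<in> Verts"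
  shows "fwd_adj y x \<longleftrightarrow> blk_of y = prv (blk_of x) \<and> nbit y = pbit x"
  unfolding fwd_adj_def
    using blk_of_lt[OF assms(1)] blk_of_lt[OF assms(2)] by (metis nxt_prv prv_nxt)

definition adj :: "bool \<times> nat \<Rightarrow> bool \<times> nat \<Rightarrow> bool" where "adj x y \<longleftrightarrow> {x, y} \<in> Edges"

lemma adj_iff_coords:
  assumes x: "x \<in> Verts" and z: "z \<in> Verts"
  shows "adj x z \<longleftrightarrow>
    (blk_of z = nxt (blk_of x) \<and> pbit z = nbit x) \<or> (blk_of z = prv (blk_of x) \<and> nbit z = pbit x)"
  unfolding adj_def edge_iff_fwd_adj[OF x z] fwd_adj_iff_prv[OF x z] by (simp add: fwd_adj_def)

lemma adj_nxt_pbit: "x \<in> Verts \<Longrightarrow> z \<in> Verts \<Longrightarrow> adj x z \<Longrightarrow> blk_of z = nxt (blk_of x) \<Longrightarrow> pbit z = nbit x"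
  using adj_iff_coords nxt_neq_prv blk_of_lt by metis

lemma adj_prv_nbit: "x \<in> Verts \<Longrightarrow> z \<in> Verts \<Longrightarrow> adj x z \<Longrightarrow> blk_of z = prv (blk_of x) \<Longrightarrow> nbit z = pbit x"
  using adj_iff_coords nxt_neq_prv blk_of_lt by metis

lemma adj_vtx_nxt: "x \<in> Verts \<Longrightarrow> adj x (vtx (nxt (blk_of x)) a (nbit x))"
  using adj_iff_coords[OF _ vtx_in_Verts] blk_of_vtx nbit_vtx pbit_vtx by simp

lemma adj_vtx_prv: "x \<in> Verts \<Longrightarrow> adj x (vtx (prv (blk_of x)) (pbit x) b)"
  using adj_iff_coords[OF _ vtx_in_Verts] blk_of_vtx nbit_vtx pbit_vtx by simp

text \<open>Graph automorphisms preserve blocks because they preserve the relation of having two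
  common neighbours.\<close>

definition two_common_nbrs :: "bool \<times> nat \<Rightarrow> bool \<times> nat \<Rightarrow> bool" where
  "two_common_nbrs x y \<longleftrightarrow>
    (\<exists>z1 z2. z1 \<noteq> z2 \<and> z1 \<in> Verts \<and> z2 \<in> Verts \<and> adj x z1 \<and> adj y z1 \<and> adj x z2 \<and> adj y z2)"

lemma two_common_nbrs_imp:
  assumes x: "x \<in> Verts" and y: "y \<in> Verts" and "two_common_nbrs x y"
  shows "blk_of x = blk_of y \<and> (nbit x = nbit y \<or> pbit x = pbit y)"
proof -
  obtain z1 z2 where z: "z1 \<noteq> z2" "z1 \<in> Verts" "z2 \<in> Verts"
      "adj x z1" "adj y z1" "adj x z2" "adj y z2"
    using assms(3) unfolding two_common_nbrs_def by blast
  have kx: "blk_of x < n" and ky: "blk_of y < n" using blk_of_lt x y by auto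
  note c1 = adj_iff_coords[OF x z(2)] adj_iff_coords[OF y z(2)]
  note c2 = adj_iff_coords[OF x z(3)] adj_iff_coords[OF y z(3)]
  show ?thesis
  proof (cases "blk_of x = blk_of y")
    case True
    then show ?thesis using z(4,5) c1 nxt_neq_prv[OF kx] by auto
  next
    case False
    have ne1: "nxt (blk_of x) \<noteq> nxt (blk_of y)" using nxt_inj[OF kx ky] False by blast
    have ne2: "prv (blk_of x) \<noteq> prv (blk_of y)" using prv_inj[OF kx ky] False by blast
    have ne3: "\<not> (nxt (blk_of x) = prv (blk_of y) \<and> prv (blk_of x) = nxt (blk_of y))"
    proof
      assume h: "nxt (blk_of x) = prv (blk_of y) \<and> prv (blk_of x) = nxt (blk_of y)"
      then have "blk_of y = nxt (nxt (blk_of x))" using nxt_prv[OF ky] by metis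
      moreover have "blk_of y = prv (prv (blk_of x))" using h prv_nxt[OF ky] by metis
      ultimately show False using nxt_nxt_neq_prv_prv[OF kx] by simp
    qed
    have "z1 = z2"
      using z(4-7) c1 c2 ne1 ne2 ne3 coords_eqI[OF z(2,3)] by metis
    with z(1) show ?thesis by simp
  qed
qed

lemma two_common_nbrsI:
  assumes x: "x \<in> Verts" and y: "y \<in> Verts" and "blk_of x = blk_of y"
    and "nbit x = nbit y \<or> pbit x = pbit y"
  shows "two_common_nbrs x y"
proof (cases "nbit x = nbit y")
  case True
  show ?thesis unfolding two_common_nbrs_def
    by (rule exI[of _ "vtx (nxt (blk_of x)) False (nbit x)"],
        rule exI[of _ "vtx (nxt (blk_of x)) True (nbit x)"])
      (use adj_vtx_nxt[OF x] adj_vtx_nxt[OF y] assms(3) True nbit_vtx[of "nxt (blk_of x)"]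
        vtx_in_Verts in \<open>metis nxt_lt\<close>)
next
  case False
  with assms(4) have "pbit x = pbit y" by simp
  show ?thesis unfolding two_common_nbrs_def
    by (rule exI[of _ "vtx (prv (blk_of x)) (pbit x) False"],
        rule exI[of _ "vtx (prv (blk_of x)) (pbit x) True"])
      (use adj_vtx_prv[OF x] adj_vtx_prv[OF y] assms(3) \<open>pbit x = pbit y\<close>
        pbit_vtx[of "prv (blk_of x)"] vtx_in_Verts in \<open>metis prv_lt\<close>)
qed

lemma two_common_nbrs_iff:
  assumes "x \<in> Verts" "y \<in> Verts"
  shows "two_common_nbrs x y \<longleftrightarrow> blk_of x = blk_of y \<and> (nbit x = nbit y \<or> pbit x = pbit y)"
  using two_common_nbrs_imp[OF assms] two_common_nbrsI[OF assms] by blast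

definition graph_aut :: "(bool \<times> nat \<Rightarrow> bool \<times> nat) \<Rightarrow> bool" where
  "graph_aut g \<longleftrightarrow> bij_betw g Verts Verts \<and> (\<forall>x\<in>Verts. \<forall>y\<in>Verts. adj (g x) (g y) \<longleftrightarrow> adj x y)"

lemma graph_aut_in: "graph_aut g \<Longrightarrow> x \<in> Verts \<Longrightarrow> g x \<in> Verts"
  unfolding graph_aut_def bij_betw_def by blast

lemma graph_aut_inj: "graph_aut g \<Longrightarrow> x \<in> Verts \<Longrightarrow> y \<in> Verts \<Longrightarrow> g x = g y \<Longrightarrow> x = y"
  unfolding graph_aut_def bij_betw_def inj_on_def by blast

lemma graph_aut_adj: "graph_aut g \<Longrightarrow> x \<in> Verts \<Longrightarrow> y \<in> Verts \<Longrightarrow> adj (g x) (g y) \<longleftrightarrow> adj x y"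
  unfolding graph_aut_def by blast

lemma graph_aut_inv:
  assumes g: "graph_aut g"
  shows "graph_aut (inv_into Verts g)" and "\<And>x. x \<in> Verts \<Longrightarrow> g (inv_into Verts g x) = x"
    and "\<And>x. x \<in> Verts \<Longrightarrow> inv_into Verts g (g x) = x"
proof -
  have b: "bij_betw g Verts Verts" using g unfolding graph_aut_def by blast
  show i1: "\<And>x. x \<in> Verts \<Longrightarrow> g (inv_into Verts g x) = x" using b by (meson bij_betw_inv_into_right)
  show i2: "\<And>x. x \<in> Verts \<Longrightarrow> inv_into Verts g (g x) = x" using b by (meson bij_betw_inv_into_left)
  have bi: "bij_betw (inv_into Verts g) Verts Verts" using b by (rule bij_betw_inv_into)
  have iv: "\<And>x. x \<in> Verts \<Longrightarrow> inv_into Verts g x \<in> Verts" using bi unfolding bij_betw_def by blast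
  show "graph_aut (inv_into Verts g)" unfolding graph_aut_def
  proof (intro conjI ballI bi)
    fix x y assume x: "x \<in> Verts" and y: "y \<in> Verts"
    show "adj (inv_into Verts g x) (inv_into Verts g y) = adj x y"
      using graph_aut_adj[OF g iv[OF x] iv[OF y]] i1 x y by simp
  qed
qed

lemma graph_aut_two_common_nbrs:
  "graph_aut g \<Longrightarrow> x \<in> Verts \<Longrightarrow> y \<in> Verts \<Longrightarrow> two_common_nbrs x y
    \<Longrightarrow> two_common_nbrs (g x) (g y)"
  unfolding two_common_nbrs_def
  by (metis graph_aut_adj graph_aut_in graph_aut_inj)

lemma graph_aut_same_blk:
  assumes g: "graph_aut g" and x: "x \<in> Verts" and y: "y \<in> Verts" and e: "blk_of x = blk_of y"
  shows "blk_of (g x) = blk_of (g y)"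
proof -
  have tw: "blk_of (g p) = blk_of (g q)" if p: "p \<in> Verts" and q: "q \<in> Verts" and pq: "p \<noteq> q"
      and h: "blk_of p = blk_of q \<and> (nbit p = nbit q \<or> pbit p = pbit q)" for p q
  proof -
    have "two_common_nbrs p q" using two_common_nbrs_iff[OF p q] h by simp
    then have "two_common_nbrs (g p) (g q)" by (rule graph_aut_two_common_nbrs[OF g p q])
    then show ?thesis
      using two_common_nbrs_iff[OF graph_aut_in[OF g p] graph_aut_in[OF g q]] by simp
  qed
  show ?thesis
  proof (cases "x = y \<or> nbit x = nbit y \<or> pbit x = pbit y")
    case True
    then show ?thesis using tw[OF x y] e by auto
  next
    case False
    define w where "w = vtx (blk_of x) (nbit x) (pbit y)"
    have kx: "blk_of x < n" using blk_of_lt x by simp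
    have w: "w \<in> Verts" "blk_of w = blk_of x" "nbit w = nbit x" "pbit w = pbit y"
      unfolding w_def
        using vtx_in_Verts[OF kx] blk_of_vtx[OF kx] nbit_vtx[OF kx] pbit_vtx[OF kx] by auto
    have "blk_of (g x) = blk_of (g w)" using tw[OF x w(1)] w False by (metis)
    also have "\<dots> = blk_of (g y)" using tw[OF w(1) y] w False e by (metis)
    finally show ?thesis .
  qed
qed

definition blk_map :: "(bool \<times> nat \<Rightarrow> bool \<times> nat) \<Rightarrow> nat \<Rightarrow> nat" where
  "blk_map g k = blk_of (g (vtx k False False))"

lemma blk_of_graph_aut: "graph_aut g \<Longrightarrow> x \<in> Verts \<Longrightarrow> blk_of (g x) = blk_map g (blk_of x)"
  unfolding blk_map_def using graph_aut_same_blk vtx_in_Verts blk_of_vtx blk_of_lt by metis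

lemma blk_map_lt: "graph_aut g \<Longrightarrow> k < n \<Longrightarrow> blk_map g k < n"
  unfolding blk_map_def using graph_aut_in vtx_in_Verts blk_of_lt by metis

lemma blk_map_inj:
  assumes g: "graph_aut g" and k: "k < n" and j: "j < n" and e: "blk_map g k = blk_map g j"
  shows "k = j"
proof -
  let ?h = "inv_into Verts g"
  have "blk_of (?h (g (vtx k False False))) = blk_of (?h (g (vtx j False False)))"
    using graph_aut_same_blk[OF graph_aut_inv(1)[OF g] graph_aut_in[OF g vtx_in_Verts[OF k]]
        graph_aut_in[OF g vtx_in_Verts[OF j]]] e
    unfolding blk_map_def by simp
  then show ?thesis using graph_aut_inv(3)[OF g] vtx_in_Verts k j blk_of_vtx by metis
qed

lemma blk_map_nxt_cases:
  assumes g: "graph_aut g" and k: "k < n"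
  shows "blk_map g (nxt k) = nxt (blk_map g k) \<or> blk_map g (nxt k) = prv (blk_map g k)"
proof -
  have "adj (vtx k False False) (vtx (nxt k) False False)"
    using adj_vtx_nxt[OF vtx_in_Verts[OF k]] blk_of_vtx[OF k] nbit_vtx[OF k] by simp
  then have "adj (g (vtx k False False)) (g (vtx (nxt k) False False))"
    using graph_aut_adj[OF g vtx_in_Verts[OF k] vtx_in_Verts[OF nxt_lt]] by simp
  then show ?thesis
    using adj_iff_coords[OF graph_aut_in[OF g vtx_in_Verts[OF k]]
        graph_aut_in[OF g vtx_in_Verts[OF nxt_lt]]]
    unfolding blk_map_def by blast
qed

lemma dihedral_cases:
  fixes \<beta> :: "nat \<Rightarrow> nat"
  assumes lt: "\<And>k. k < n \<Longrightarrow> \<beta> k < n"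
    and inj: "\<And>k j. k < n \<Longrightarrow> j < n \<Longrightarrow> \<beta> k = \<beta> j \<Longrightarrow> k = j"
    and st: "\<And>k. k < n \<Longrightarrow> \<beta> (nxt k) = nxt (\<beta> k) \<or> \<beta> (nxt k) = prv (\<beta> k)"
  shows "(\<forall>k<n. \<beta> (nxt k) = nxt (\<beta> k)) \<or> (\<forall>k<n. \<beta> (nxt k) = prv (\<beta> k))"
proof -
  define P where "P k \<longleftrightarrow> \<beta> (nxt k) = nxt (\<beta> k)" for k
  have ex: "\<not> P k \<longleftrightarrow> \<beta> (nxt k) = prv (\<beta> k)" if k: "k < n" for k
    using st[OF k] nxt_neq_prv[OF lt[OF k]] unfolding P_def by auto
  have step: "P k \<longleftrightarrow> P (nxt k)" if k: "k < n" for k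
  proof -
    have "\<beta> (nxt (nxt k)) \<noteq> \<beta> k" using inj[OF nxt_lt k] nxt_nxt_neq[OF k] by blast
    then show ?thesis
      using ex[OF k] ex[OF nxt_lt] prv_nxt[OF lt[OF k]] nxt_prv[OF lt[OF k]]
      unfolding P_def by metis
  qed
  have all: "k < n \<Longrightarrow> P k = P 0" for k
  proof (induction k)
    case 0
    then show ?case by simp
  next
    case (Suc k)
    then show ?case using step[of k] nxt_Suc[of k] by simp
  qed
  show ?thesis
  proof (cases "P 0")
    case True
    then show ?thesis using all unfolding P_def by blast
  next
    case False
    then show ?thesis using all ex by blast
  qed
qed

lemma graph_aut_coords_inj:
  assumes g: "graph_aut g" and p: "p \<in> Verts" and q: "q \<in> Verts" and e: "blk_of p = blk_of q"
    and a: "nbit (g p) = nbit (g q)" and b: "pbit (g p) = pbit (g q)"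
  shows "p = q"
  using graph_aut_inj[OF g p q]
    coords_eqI[OF graph_aut_in[OF g p] graph_aut_in[OF g q] graph_aut_same_blk[OF g p q e] a b]
    by simp

definition rotating :: "(bool \<times> nat \<Rightarrow> bool \<times> nat) \<Rightarrow> bool" where
  "rotating g \<longleftrightarrow> (\<forall>k<n. blk_map g (nxt k) = nxt (blk_map g k))"
definition reflecting :: "(bool \<times> nat \<Rightarrow> bool \<times> nat) \<Rightarrow> bool" where
  "reflecting g \<longleftrightarrow> (\<forall>k<n. blk_map g (nxt k) = prv (blk_map g k))"

lemma rotating_or_reflecting: "graph_aut g \<Longrightarrow> rotating g \<or> reflecting g"
  unfolding rotating_def reflecting_def
  by (rule dihedral_cases) (use blk_map_lt blk_map_inj blk_map_nxt_cases in blast)+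

lemma rotating_prv: "graph_aut g \<Longrightarrow> rotating g \<Longrightarrow> k < n \<Longrightarrow> blk_map g (prv k) = prv (blk_map g k)"
  unfolding rotating_def by (metis nxt_prv prv_lt prv_nxt blk_map_lt)

lemma reflecting_prv: "graph_aut g \<Longrightarrow> reflecting g \<Longrightarrow> k < n \<Longrightarrow> blk_map g (prv k) = nxt (blk_map g k)"
  unfolding reflecting_def by (metis nxt_prv prv_lt blk_map_lt)

lemma common_nbr_nxt:
  assumes x: "x \<in> Verts" and y: "y \<in> Verts" and e: "blk_of x = blk_of y" "nbit x = nbit y"
  defines "z \<equiv> vtx (nxt (blk_of x)) False (nbit x)"
  shows "z \<in> Verts" "adj x z" "adj y z" "blk_of z = nxt (blk_of x)"
  using adj_vtx_nxt[OF x] adj_vtx_nxt[OF y] e vtx_in_Verts blk_of_vtx unfolding z_def by auto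

lemma common_nbr_prv:
  assumes x: "x \<in> Verts" and y: "y \<in> Verts" and e: "blk_of x = blk_of y" "pbit x = pbit y"
  defines "z \<equiv> vtx (prv (blk_of x)) (pbit x) False"
  shows "z \<in> Verts" "adj x z" "adj y z" "blk_of z = prv (blk_of x)"
  using adj_vtx_prv[OF x] adj_vtx_prv[OF y] e vtx_in_Verts blk_of_vtx unfolding z_def by auto

lemma rotating_nbit:
  assumes g: "graph_aut g" "rotating g" and x: "x \<in> Verts" and y: "y \<in> Verts"
    and e: "blk_of x = blk_of y" "nbit x = nbit y"
  shows "nbit (g x) = nbit (g y)"
proof -
  note z = common_nbr_nxt[OF x y e]
  let ?z = "vtx (nxt (blk_of x)) False (nbit x)"
  have bz: "blk_of (g ?z) = nxt (blk_of (g x))"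
    using blk_of_graph_aut[OF g(1)] z(1,4) x g(2) blk_of_lt unfolding rotating_def by simp
  have bz': "blk_of (g ?z) = nxt (blk_of (g y))"
    using bz graph_aut_same_blk[OF g(1) x y e(1)] by simp
  have gz: "g ?z \<in> Verts" using graph_aut_in[OF g(1) z(1)] .
  have "adj (g x) (g ?z)" "adj (g y) (g ?z)" using graph_aut_adj[OF g(1)] x y z by auto
  then show ?thesis
    using adj_nxt_pbit[OF graph_aut_in[OF g(1) x] gz _ bz]
      adj_nxt_pbit[OF graph_aut_in[OF g(1) y] gz _ bz']
    by simp
qed

lemma rotating_pbit:
  assumes g: "graph_aut g" "rotating g" and x: "x \<in> Verts" and y: "y \<in> Verts"
    and e: "blk_of x = blk_of y" "pbit x = pbit y"
  shows "pbit (g x) = pbit (g y)"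
proof -
  note z = common_nbr_prv[OF x y e]
  let ?z = "vtx (prv (blk_of x)) (pbit x) False"
  have bz: "blk_of (g ?z) = prv (blk_of (g x))"
    using blk_of_graph_aut[OF g(1)] z(1,4) x rotating_prv[OF g] blk_of_lt by simp
  have bz': "blk_of (g ?z) = prv (blk_of (g y))"
    using bz graph_aut_same_blk[OF g(1) x y e(1)] by simp
  have gz: "g ?z \<in> Verts" using graph_aut_in[OF g(1) z(1)] .
  have "adj (g x) (g ?z)" "adj (g y) (g ?z)" using graph_aut_adj[OF g(1)] x y z by auto
  then show ?thesis
    using adj_prv_nbit[OF graph_aut_in[OF g(1) x] gz _ bz]
      adj_prv_nbit[OF graph_aut_in[OF g(1) y] gz _ bz']
    by simp
qed

lemma reflecting_nbit:
  assumes g: "graph_aut g" "reflecting g" and x: "x \<in> Verts" and y: "y \<in> Verts"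
    and e: "blk_of x = blk_of y" "nbit x = nbit y"
  shows "pbit (g x) = pbit (g y)"
proof -
  note z = common_nbr_nxt[OF x y e]
  let ?z = "vtx (nxt (blk_of x)) False (nbit x)"
  have bz: "blk_of (g ?z) = prv (blk_of (g x))"
    using blk_of_graph_aut[OF g(1)] z(1,4) x g(2) blk_of_lt unfolding reflecting_def by simp
  have bz': "blk_of (g ?z) = prv (blk_of (g y))"
    using bz graph_aut_same_blk[OF g(1) x y e(1)] by simp
  have gz: "g ?z \<in> Verts" using graph_aut_in[OF g(1) z(1)] .
  have "adj (g x) (g ?z)" "adj (g y) (g ?z)" using graph_aut_adj[OF g(1)] x y z by auto
  then show ?thesis
    using adj_prv_nbit[OF graph_aut_in[OF g(1) x] gz _ bz]
      adj_prv_nbit[OF graph_aut_in[OF g(1) y] gz _ bz']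
    by simp
qed

lemma reflecting_pbit:
  assumes g: "graph_aut g" "reflecting g" and x: "x \<in> Verts" and y: "y \<in> Verts"
    and e: "blk_of x = blk_of y" "pbit x = pbit y"
  shows "nbit (g x) = nbit (g y)"
proof -
  note z = common_nbr_prv[OF x y e]
  let ?z = "vtx (prv (blk_of x)) (pbit x) False"
  have bz: "blk_of (g ?z) = nxt (blk_of (g x))"
    using blk_of_graph_aut[OF g(1)] z(1,4) x reflecting_prv[OF g] blk_of_lt by simp
  have bz': "blk_of (g ?z) = nxt (blk_of (g y))"
    using bz graph_aut_same_blk[OF g(1) x y e(1)] by simp
  have gz: "g ?z \<in> Verts" using graph_aut_in[OF g(1) z(1)] .
  have "adj (g x) (g ?z)" "adj (g y) (g ?z)" using graph_aut_adj[OF g(1)] x y z by auto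
  then show ?thesis
    using adj_nxt_pbit[OF graph_aut_in[OF g(1) x] gz _ bz]
      adj_nxt_pbit[OF graph_aut_in[OF g(1) y] gz _ bz']
    by simp
qed

definition nflip_of :: "(bool \<times> nat \<Rightarrow> bool \<times> nat) \<Rightarrow> nat \<Rightarrow> bool" where
  "nflip_of g k = nbit (g (vtx k False False))"
definition pflip_of :: "(bool \<times> nat \<Rightarrow> bool \<times> nat) \<Rightarrow> nat \<Rightarrow> bool" where
  "pflip_of g k = pbit (g (vtx k False False))"

lemma vtx_blk_coords:
  assumes "k < n"
  shows "vtx k False False \<in> Verts" "vtx k True False \<in> Verts" "vtx k False True \<in> Verts"
    "blk_of (vtx k False False) = k" "blk_of (vtx k True False) = k" "blk_of (vtx k False True) = k"
    "nbit (vtx k False False) = False" "nbit (vtx k True False)" "nbit (vtx k False True) = False"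
    "pbit (vtx k False False) = False" "pbit (vtx k True False) = False" "pbit (vtx k False True)"
  using vtx_in_Verts[OF assms] blk_of_vtx[OF assms] nbit_vtx[OF assms] pbit_vtx[OF assms] by auto

lemma rotating_separates_bits:
  assumes g: "graph_aut g" "rotating g" and k: "k < n"
  shows "nbit (g (vtx k True False)) \<noteq> nbit (g (vtx k False False))"
    and "pbit (g (vtx k False True)) \<noteq> pbit (g (vtx k False False))"
  using rotating_pbit[OF g] rotating_nbit[OF g] graph_aut_coords_inj[OF g(1)] vtx_blk_coords[OF k]
  by (metis (no_types, opaque_lifting))+

lemma reflecting_separates_bits:
  assumes g: "graph_aut g" "reflecting g" and k: "k < n"
  shows "pbit (g (vtx k True False)) \<noteq> pbit (g (vtx k False False))"
    and "nbit (g (vtx k False True)) \<noteq> nbit (g (vtx k False False))"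
  using reflecting_pbit[OF g] reflecting_nbit[OF g] graph_aut_coords_inj[OF g(1)] vtx_blk_coords[OF k]
  by (metis (no_types, opaque_lifting))+

lemma rotating_coords:
  assumes g: "graph_aut g" "rotating g" and x: "x \<in> Verts"
  shows "nbit (g x) = (nbit x \<noteq> nflip_of g (blk_of x))"
    and "pbit (g x) = (pbit x \<noteq> pflip_of g (blk_of x))"
proof -
  let ?k = "blk_of x"
  have k: "?k < n" using blk_of_lt[OF x] .
  note c = vtx_blk_coords[OF k]
  show "nbit (g x) = (nbit x \<noteq> nflip_of g ?k)"
  proof (cases "nbit x")
    case True
    then have "nbit (g x) = nbit (g (vtx ?k True False))"
      using rotating_nbit[OF g x c(2)] c by simp
    then show ?thesis using rotating_separates_bits(1)[OF g k] True unfolding nflip_of_def by simp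
  next
    case False
    then have "nbit (g x) = nbit (g (vtx ?k False False))"
      using rotating_nbit[OF g x c(1)] c by simp
    then show ?thesis using False unfolding nflip_of_def by simp
  qed
  show "pbit (g x) = (pbit x \<noteq> pflip_of g ?k)"
  proof (cases "pbit x")
    case True
    then have "pbit (g x) = pbit (g (vtx ?k False True))"
      using rotating_pbit[OF g x c(3)] c by simp
    then show ?thesis using rotating_separates_bits(2)[OF g k] True unfolding pflip_of_def by simp
  next
    case False
    then have "pbit (g x) = pbit (g (vtx ?k False False))"
      using rotating_pbit[OF g x c(1)] c by simp
    then show ?thesis using False unfolding pflip_of_def by simp
  qed
qed

lemma reflecting_coords:
  assumes g: "graph_aut g" "reflecting g" and x: "x \<in> Verts"
  shows "nbit (g x) = (pbit x \<noteq> nflip_of g (blk_of x))"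
    and "pbit (g x) = (nbit x \<noteq> pflip_of g (blk_of x))"
proof -
  let ?k = "blk_of x"
  have k: "?k < n" using blk_of_lt[OF x] .
  note c = vtx_blk_coords[OF k]
  show "nbit (g x) = (pbit x \<noteq> nflip_of g ?k)"
  proof (cases "pbit x")
    case True
    then have "nbit (g x) = nbit (g (vtx ?k False True))"
      using reflecting_pbit[OF g x c(3)] c by simp
    then show ?thesis using reflecting_separates_bits(2)[OF g k] True unfolding nflip_of_def by simp
  next
    case False
    then have "nbit (g x) = nbit (g (vtx ?k False False))"
      using reflecting_pbit[OF g x c(1)] c by simp
    then show ?thesis using False unfolding nflip_of_def by simp
  qed
  show "pbit (g x) = (nbit x \<noteq> pflip_of g ?k)"
  proof (cases "nbit x")
    case True
    then have "pbit (g x) = pbit (g (vtx ?k True False))"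
      using reflecting_nbit[OF g x c(2)] c by simp
    then show ?thesis using reflecting_separates_bits(1)[OF g k] True unfolding pflip_of_def by simp
  next
    case False
    then have "pbit (g x) = pbit (g (vtx ?k False False))"
      using reflecting_nbit[OF g x c(1)] c by simp
    then show ?thesis using False unfolding pflip_of_def by simp
  qed
qed

lemma rotating_blk_map_mod:
  assumes g: "graph_aut g" "rotating g"
  shows "k < n \<Longrightarrow> int (blk_map g k) mod int n = (int (blk_map g 0) + int k) mod int n"
proof (induction k)
  case 0 then show ?case using blk_map_lt[OF g(1)] by simp
next
  case (Suc k)
  then have k: "k < n" by simp
  have "blk_map g (Suc k) = nxt (blk_map g k)"
    using g(2) nxt_Suc[of k] Suc.prems k unfolding rotating_def by (metis Suc_eq_plus1)
  then have "int (blk_map g (Suc k)) mod int n = (int (blk_map g k) + 1) mod int n"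
    using nxt_mod_int by simp
  also have "\<dots> = (int (blk_map g k) mod int n + 1) mod int n" by (simp add: mod_simps)
  also have "\<dots> = (int (blk_map g 0) + int (Suc k)) mod int n"
    using Suc.IH[OF k] by (simp add: mod_simps algebra_simps)
  finally show ?case .
qed

lemma reflecting_blk_map_mod:
  assumes g: "graph_aut g" "reflecting g"
  shows "k < n \<Longrightarrow> int (blk_map g k) mod int n = (int (blk_map g 0) - int k) mod int n"
proof (induction k)
  case 0 then show ?case using blk_map_lt[OF g(1)] by simp
next
  case (Suc k)
  then have k: "k < n" by simp
  have "blk_map g (Suc k) = prv (blk_map g k)"
    using g(2) nxt_Suc[of k] Suc.prems k unfolding reflecting_def by (metis Suc_eq_plus1)
  then have "int (blk_map g (Suc k)) mod int n = (int (blk_map g k) - 1) mod int n"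
    using prv_mod_int by simp
  also have "\<dots> = (int (blk_map g k) mod int n - 1) mod int n" by (simp add: mod_simps)
  also have "\<dots> = (int (blk_map g 0) - int (Suc k)) mod int n"
    using Suc.IH[OF k] by (simp add: mod_simps algebra_simps)
  finally show ?case .
qed

section \<open>The group \<open>N\<close>\<close>

abbreviation periodic :: "(int \<Rightarrow> bool) \<Rightarrow> bool" where
  "periodic \<alpha> \<equiv> periodic_fun_simple \<alpha> (int n)"

text \<open>The element of \<open>N\<close> encoded by \<open>\<alpha>\<close>; the generator \<open>\<sigma>\<^sub>i\<close> is encoded by the indicator of
  \<open>i\<close> modulo \<open>n\<close>.\<close>

definition flip :: "(int \<Rightarrow> bool) \<Rightarrow> bool \<times> nat \<Rightarrow> bool \<times> nat" where
  "flip \<alpha> x =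
    (if x \<in> Verts
     then vtx (blk_of x) (nbit x \<noteq> \<alpha> (int (blk_of x))) (pbit x \<noteq> \<alpha> (int (blk_of x) - 1))
     else x)"

lemma flip_outside: "x \<notin> Verts \<Longrightarrow> flip \<alpha> x = x"
  unfolding flip_def by simp

lemma flip_in_Verts: "x \<in> Verts \<Longrightarrow> flip \<alpha> x \<in> Verts"
  unfolding flip_def
  using vtx_in_Verts blk_of_lt by simp

lemma flip_coords:
  assumes "x \<in> Verts"
  shows "blk_of (flip \<alpha> x) = blk_of x" "nbit (flip \<alpha> x) = (nbit x \<noteq> \<alpha> (int (blk_of x)))"
      "pbit (flip \<alpha> x) = (pbit x \<noteq> \<alpha> (int (blk_of x) - 1))"
  unfolding flip_def using assms blk_of_lt blk_of_vtx nbit_vtx pbit_vtx by auto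

lemma flip_comp: "flip \<alpha> \<circ> flip \<gamma> = flip (\<lambda>m. \<alpha> m \<noteq> \<gamma> m)"
proof
  fix x show "(flip \<alpha> \<circ> flip \<gamma>) x = flip (\<lambda>m. \<alpha> m \<noteq> \<gamma> m) x"
  proof (cases "x \<in> Verts")
    case True
    show ?thesis by (rule coords_eqI) (use True flip_in_Verts flip_coords in auto)
  next
    case False then show ?thesis by (simp add: flip_outside)
  qed
qed

lemma flip_zero: "flip (\<lambda>m. False) = id"
proof
  fix x show "flip (\<lambda>m. False) x = id x" unfolding flip_def using vtx_of_coords by auto
qed

lemma reflecting_conj_flip:
  assumes g: "graph_aut g" "reflecting g" and out: "\<And>x. x \<notin> Verts \<Longrightarrow> g x = x" and p: "periodic \<alpha>"
  shows "g \<circ> flip \<alpha> = flip (\<lambda>m. \<alpha> (int (blk_map g 0) - m - 1)) \<circ> g"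
proof
  fix x
  show "(g \<circ> flip \<alpha>) x = (flip (\<lambda>m. \<alpha> (int (blk_map g 0) - m - 1)) \<circ> g) x"
  proof (cases "x \<in> Verts")
    case x: True
    let ?k = "blk_of x"
    have k: "?k < n" using blk_of_lt[OF x] .
    have bm: "int (blk_map g ?k) mod int n = (int (blk_map g 0) - int ?k) mod int n"
      using reflecting_blk_map_mod[OF g k] .
    have dr: "\<And>D. (D - int (blk_map g ?k)) mod int n = (D - (int (blk_map g 0) - int ?k)) mod int n"
      using bm by (metis mod_diff_right_eq)
    have e1: "\<alpha> (int (blk_map g 0) - int (blk_map g ?k) - 1) = \<alpha> (int ?k - 1)"
      by (rule periodic_cong[OF p])
        (use dr[of "int (blk_map g 0) - 1"] in \<open>simp add: algebra_simps\<close>)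
    have e2: "\<alpha> (int (blk_map g 0) - (int (blk_map g ?k) - 1) - 1) = \<alpha> (int ?k)"
      by (rule periodic_cong[OF p]) (use dr[of "int (blk_map g 0)"] in \<open>simp add: algebra_simps\<close>)
    have gx: "g x \<in> Verts" using graph_aut_in[OF g(1) x] .
    have fx: "flip \<alpha> x \<in> Verts" using flip_in_Verts[OF x] .
    let ?a = "\<lambda>m. \<alpha> (int (blk_map g 0) - m - 1)"
    have b1: "blk_of (g (flip \<alpha> x)) = blk_map g ?k"
      using blk_of_graph_aut[OF g(1) fx] flip_coords[OF x] by simp
    have b2: "blk_of (flip ?a (g x)) = blk_map g ?k"
      using flip_coords(1)[OF gx] blk_of_graph_aut[OF g(1) x] by simp
    have l1: "nbit (g (flip \<alpha> x)) = ((pbit x \<noteq> \<alpha> (int ?k - 1)) \<noteq> nflip_of g ?k)"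
      using reflecting_coords(1)[OF g fx] flip_coords[OF x] by simp
    have l2: "nbit (flip ?a (g x)) = ((pbit x \<noteq> nflip_of g ?k) \<noteq> \<alpha> (int ?k - 1))"
      using flip_coords(2)[OF gx] reflecting_coords(1)[OF g x] blk_of_graph_aut[OF g(1) x] e1
        by simp
    have m1: "pbit (g (flip \<alpha> x)) = ((nbit x \<noteq> \<alpha> (int ?k)) \<noteq> pflip_of g ?k)"
      using reflecting_coords(2)[OF g fx] flip_coords[OF x] by simp
    have m2: "pbit (flip ?a (g x)) = ((nbit x \<noteq> pflip_of g ?k) \<noteq> \<alpha> (int ?k))"
      using flip_coords(3)[OF gx] reflecting_coords(2)[OF g x] blk_of_graph_aut[OF g(1) x] e2
        by simp
    have "g (flip \<alpha> x) = flip ?a (g x)"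
      by (rule coords_eqI[OF graph_aut_in[OF g(1) fx] flip_in_Verts[OF gx]])
        (use b1 b2 l1 l2 m1 m2 in auto)
    then show ?thesis by simp
  next
    case False then show ?thesis using out by (simp add: flip_outside)
  qed
qed

lemma rotating_fixing_blk0_eq_flip:
  assumes g: "graph_aut g" "rotating g" and b0: "blk_map g 0 = 0" and out: "\<And>x. x \<notin> Verts \<Longrightarrow> g x = x"
  shows "g = flip (\<lambda>m. nflip_of g (nat (m mod int n)))"
proof
  have bm: "blk_map g k = k" if k: "k < n" for k
  proof -
    have "int (blk_map g k) mod int n = int k mod int n"
      using rotating_blk_map_mod[OF g k] b0 by simp
    then show ?thesis using blk_map_lt[OF g(1) k] k by (simp add: zmod_int)
  qed
  have pflip_of: "pflip_of g k = nflip_of g (prv k)" if k: "k < n" for k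
  proof -
    let ?x0 = "vtx (prv k) False False" and ?y = "vtx k False False"
    have v: "?x0 \<in> Verts" "?y \<in> Verts" using vtx_in_Verts k by auto
    have "adj ?x0 ?y" using adj_vtx_nxt[OF v(1)] blk_of_vtx nbit_vtx k by simp
    then have a: "adj (g ?x0) (g ?y)" using graph_aut_adj[OF g(1) v] by simp
    have "blk_of (g ?y) = k" using blk_of_graph_aut[OF g(1) v(2)] blk_of_vtx k bm by simp
    moreover have "blk_of (g ?x0) = prv k"
      using blk_of_graph_aut[OF g(1) v(1)] blk_of_vtx k bm by simp
    ultimately have "pbit (g ?y) = nbit (g ?x0)"
      using adj_nxt_pbit[OF graph_aut_in[OF g(1) v(1)] graph_aut_in[OF g(1) v(2)] a] k by simp
    then show ?thesis unfolding nflip_of_def pflip_of_def by simp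
  qed
  fix x
  show "g x = flip (\<lambda>m. nflip_of g (nat (m mod int n))) x"
  proof (cases "x \<in> Verts")
    case x: True
    let ?k = "blk_of x"
    have k: "?k < n" using blk_of_lt[OF x] .
    have pk: "nat ((int ?k - 1) mod int n) = prv ?k"
      using prv_mod_int[of ?k] prv_lt[of ?k] by (metis nat_int zmod_int mod_less)
    show ?thesis
      using coords_eqI[OF graph_aut_in[OF g(1) x] flip_in_Verts[OF x]] flip_coords[OF x]
        rotating_coords[OF g x] blk_of_graph_aut[OF g(1) x] bm[OF k]
        pflip_of[OF k] pk k by simp
  next
    case False then show ?thesis using out by (simp add: flip_outside)
  qed
qed

lemma vtx_eq_iff:
  assumes i: "i < n"
  shows "vtx i a b = vtx i a' b' \<longleftrightarrow> a = a' \<and> b = b'"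
proof
  assume h: "vtx i a b = vtx i a' b'"
  have "nbit (vtx i a b) = nbit (vtx i a' b')" "pbit (vtx i a b) = pbit (vtx i a' b')"
    using h by simp_all
  then show "a = a' \<and> b = b'" using nbit_vtx[OF i] pbit_vtx[OF i] by simp
qed simp

lemma UVWZ_eq_vtx: "U n i = vtx i False False" "Vv n i = vtx i True False"
    "W n i = vtx i False True" "Z n i = vtx i True True"
  unfolding vtx_def by simp_all

definition flips_nbit :: "nat \<Rightarrow> bool" where "flips_nbit c \<longleftrightarrow> c = 1 \<or> c = 3"
definition flips_pbit :: "nat \<Rightarrow> bool" where "flips_pbit c \<longleftrightarrow> c = 2 \<or> c = 3"

lemma blk_act_vtx:
  assumes i: "i < n"
  shows "blk_act n i c (vtx i a b) = vtx i (a \<noteq> flips_nbit c) (b \<noteq> flips_pbit c)"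
  unfolding blk_act_def UVWZ_eq_vtx flips_nbit_def flips_pbit_def
  by (cases a; cases b) (auto simp: transpose_def vtx_eq_iff[OF i])

lemma blk_act_eq:
  assumes i: "i < n"
  shows "blk_act n i c x =
    (if x \<in> Verts \<and> blk_of x = i then vtx i (nbit x \<noteq> flips_nbit c) (pbit x \<noteq> flips_pbit c) else x)"
proof (cases "x \<in> Verts \<and> blk_of x = i")
  case True
  then have x: "x = vtx i (nbit x) (pbit x)" using vtx_of_coords by metis
  have "blk_act n i c x = vtx i (nbit x \<noteq> flips_nbit c) (pbit x \<noteq> flips_pbit c)"
    using blk_act_vtx[OF i, of c "nbit x" "pbit x"] x by simp
  then show ?thesis using True by simp
next
  case False
  then have ne: "x \<noteq> vtx i a b" for a b using vtx_in_Verts[OF i] blk_of_vtx[OF i] by metis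
  show ?thesis using False unfolding blk_act_def UVWZ_eq_vtx by (auto simp: transpose_def ne)
qed

lemma foldr_blk_act:
  "m \<le> n \<Longrightarrow> foldr (\<circ>) (map (\<lambda>i. blk_act n i (j i)) [0..<m]) id x
     = (if x \<in> Verts \<and> blk_of x < m
        then vtx (blk_of x) (nbit x \<noteq> flips_nbit (j (blk_of x))) (pbit x \<noteq> flips_pbit (j (blk_of x)))
        else x)"
proof (induction m arbitrary: x)
  case 0 then show ?case by simp
next
  case (Suc m)
  have m: "m < n" using Suc.prems by simp
  have "foldr (\<circ>) (map (\<lambda>i. blk_act n i (j i)) [0..<Suc m]) id x
        = foldr (\<circ>) (map (\<lambda>i. blk_act n i (j i)) [0..<m]) id (blk_act n m (j m) x)"
    using foldr_comp[of "map (\<lambda>i. blk_act n i (j i)) [0..<m]" "blk_act n m (j m)"] by simp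
  also have "\<dots> = (if x \<in> Verts \<and> blk_of x < Suc m
      then vtx (blk_of x) (nbit x \<noteq> flips_nbit (j (blk_of x))) (pbit x \<noteq> flips_pbit (j (blk_of x)))
      else x)"
  proof (cases "x \<in> Verts \<and> blk_of x = m")
    case True
    have e: "blk_act n m (j m) x = vtx m (nbit x \<noteq> flips_nbit (j m)) (pbit x \<noteq> flips_pbit (j m))"
      using blk_act_eq[OF m] True by simp
    show ?thesis unfolding e Suc.IH[OF Suc_leD[OF Suc.prems]]
      using True m vtx_in_Verts blk_of_vtx by simp
  next
    case False
    have e: "blk_act n m (j m) x = x" unfolding blk_act_eq[OF m] using False by (rule if_not_P)
    have "(x \<in> Verts \<and> blk_of x < m) = (x \<in> Verts \<and> blk_of x < Suc m)" using False by auto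
    then show ?thesis unfolding e Suc.IH[OF Suc_leD[OF Suc.prems]] by simp
  qed
  finally show ?case .
qed

lemma elt_eq_flip:
  assumes h: "\<And>k. k < n \<Longrightarrow> flips_nbit (j k) = \<alpha> (int k) \<and> flips_pbit (j k) = \<alpha> (int k - 1)"
  shows "elt n j = flip \<alpha>"
proof
  fix x
  show "elt n j x = flip \<alpha> x"
    unfolding elt_def foldr_blk_act[OF order_refl] flip_def using h blk_of_lt by auto
qed

lemma sigma_eq_flip:
  assumes i: "i < n"
  shows "sigma n i = flip (\<lambda>m. m mod int n = int i)"
proof -
  have s: "sigma n i = blk_act n i 1 \<circ> blk_act n (nxt i) 2"
    unfolding sigma_def blk_act_def nxt_def by (simp add: comp_assoc)
  show ?thesis
  proof
    fix x
    show "sigma n i x = flip (\<lambda>m. m mod int n = int i) x"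
    proof (cases "x \<in> Verts")
      case x: True
      let ?k = "blk_of x"
      have k: "?k < n" using blk_of_lt[OF x] .
      have ni: "nxt i \<noteq> i" using nxt_neq[OF i] .
      have a1: "(int ?k mod int n = int i) = (?k = i)" using k i by (simp add: zmod_int)
      have a2: "((int ?k - 1) mod int n = int i) = (?k = nxt i)"
      proof -
        have "(int ?k - 1) mod int n = int (prv ?k)"
          using prv_mod_int[of ?k] prv_lt[of ?k] by (simp add: zmod_int)
        then show ?thesis using k i nxt_prv prv_nxt by (metis of_nat_eq_iff)
      qed
      show ?thesis unfolding s comp_def flip_def
        using x k a1 a2 ni blk_act_eq[OF i] blk_act_eq[OF nxt_lt] vtx_in_Verts blk_of_vtx nbit_vtx
          pbit_vtx vtx_of_coords[OF x]
        by (auto simp: flips_nbit_def flips_pbit_def)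
    next
      case False
      then show ?thesis unfolding s comp_def flip_def
        using blk_act_eq[OF i] blk_act_eq[OF nxt_lt] by simp
    qed
  qed
qed

lemma Ngrp_imp_flip: "t \<in> Ngrp n \<Longrightarrow> \<exists>\<alpha>. periodic \<alpha> \<and> t = flip \<alpha>"
proof (induction rule: Ngrp.induct)
  case Ngrp_id
  show ?case by (rule exI[of _ "\<lambda>m. False"]) (simp add: periodic_fun_simple_def flip_zero)
next
  case (Ngrp_step t i)
  obtain \<alpha> where a: "periodic \<alpha>" "t = flip \<alpha>" using Ngrp_step.IH by blast
  have "sigma n i \<circ> t = flip (\<lambda>m. (m mod int n = int i) \<noteq> \<alpha> m)"
    unfolding a(2) sigma_eq_flip[OF Ngrp_step.hyps(2)] flip_comp by simp
  moreover have "periodic (\<lambda>m. (m mod int n = int i) \<noteq> \<alpha> m)"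
    using a(1) unfolding periodic_fun_simple_def by simp
  ultimately show ?case by blast
qed

lemma flip_in_Ngrp:
  assumes p: "periodic \<alpha>"
  shows "flip \<alpha> \<in> Ngrp n"
proof -
  define am where "am k = (\<lambda>z. \<alpha> z \<and> nat (z mod int n) < k)" for k
  have "k \<le> n \<Longrightarrow> flip (am k) \<in> Ngrp n" for k
  proof (induction k)
    case 0
    have e: "am 0 = (\<lambda>z. False)" unfolding am_def by simp
    show ?case unfolding e flip_zero by (rule Ngrp.Ngrp_id)
  next
    case (Suc k)
    have k: "k < n" using Suc.prems by simp
    have IH: "flip (am k) \<in> Ngrp n" using Suc by simp
    have zk: "\<alpha> z = \<alpha> (int k)" if "z mod int n = int k" for z
      using periodic_cong[OF p, of z "int k"] that k by (simp add: zmod_int)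
    have nn: "z mod int n = int k \<longleftrightarrow> nat (z mod int n) = k" for z using n_ge_5 by auto
    show ?case
    proof (cases "\<alpha> (int k)")
      case True
      have "am (Suc k) = (\<lambda>z. (z mod int n = int k) \<noteq> am k z)"
        unfolding am_def using True zk nn by (auto simp: less_Suc_eq)
      then have eqn: "flip (am (Suc k)) = sigma n k \<circ> flip (am k)"
        using sigma_eq_flip[OF k] flip_comp by simp
      show ?thesis unfolding eqn by (rule Ngrp.Ngrp_step[OF IH k])
    next
      case False
      have "am (Suc k) = am k" unfolding am_def using False zk nn by (auto simp: less_Suc_eq)
      then show ?thesis using IH by simp
    qed
  qed
  moreover have "am n = \<alpha>" unfolding am_def using n_ge_5 by (auto simp: nat_less_iff)
  ultimately show ?thesis by force
qed

lemma Ngrp_eq: "Ngrp n = flip ` {\<alpha>. periodic \<alpha>}"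
  using Ngrp_imp_flip flip_in_Ngrp by blast

definition blk_code :: "bool \<Rightarrow> bool \<Rightarrow> nat" where
  "blk_code a b = (if a then (if b then 3 else 1) else (if b then 2 else 0))"

lemma flips_blk_code: "flips_nbit (blk_code a b) = a" "flips_pbit (blk_code a b) = b"
  unfolding blk_code_def flips_nbit_def flips_pbit_def by auto

lemma elt_per_eq_flip:
  assumes per: "periodic_fun_simple \<alpha> (int d)" and d: "length L = d" "d > 0"
    and L: "\<And>r. r < d \<Longrightarrow> L ! r = blk_code (\<alpha> (int r)) (\<alpha> (int r - 1))"
  shows "elt n (per L) = flip \<alpha>"
proof (rule elt_eq_flip)
  fix k assume "k < n"
  have "\<alpha> (int k) = \<alpha> (int (k mod d))" "\<alpha> (int k - 1) = \<alpha> (int (k mod d) - 1)"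
    by (rule periodic_cong[OF per], simp add: zmod_int mod_diff_left_eq)+
  then show "flips_nbit (per L k) = \<alpha> (int k) \<and> flips_pbit (per L k) = \<alpha> (int k - 1)"
    unfolding per_def using L[of "k mod d"] d flips_blk_code by simp
qed

lemma per_replicate: "per [c] = per [c, c, c]" "per [c] = per [c, c, c, c]"
proof -
  show "per [c] = per [c, c, c]"
  proof
    fix i :: nat
    have "i mod 3 = 0 \<or> i mod 3 = 1 \<or> i mod 3 = 2" by auto
    then show "per [c] i = per [c, c, c] i" unfolding per_def by (elim disjE) simp_all
  qed
  show "per [c] = per [c, c, c, c]"
  proof
    fix i :: nat
    have "i mod 4 = 0 \<or> i mod 4 = 1 \<or> i mod 4 = 2 \<or> i mod 4 = 3" by auto
    then show "per [c] i = per [c, c, c, c] i" unfolding per_def by (elim disjE) simp_all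
  qed
qed

lemma per_twice: "per [a, b] = per [a, b, a, b]"
proof
  fix i :: nat
  have e: "per [a, b] i = [a, b] ! (i mod 2)" unfolding per_def by (simp add: numeral_2_eq_2)
  have "i mod 4 = 0 \<or> i mod 4 = 1 \<or> i mod 4 = 2 \<or> i mod 4 = 3" by auto
  moreover have "i mod 2 = (i mod 4) mod 2" by (simp add: mod_mod_cancel)
  ultimately show "per [a, b] i = per [a, b, a, b] i" unfolding e
    unfolding per_def by (elim disjE) simp_all
qed

lemma periodic_list:
  assumes "xs \<noteq> []"
  shows "periodic_fun_simple (\<lambda>m. xs ! nat (m mod int (length xs))) (int (length xs))"
  by (rule periodic_fun_simple.intro) simp

definition code3 :: "bool \<Rightarrow> bool \<Rightarrow> bool \<Rightarrow> nat \<Rightarrow> nat" where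
  "code3 a0 a1 a2 = per [blk_code a0 a2, blk_code a1 a0, blk_code a2 a1]"

definition ext3 :: "bool \<Rightarrow> bool \<Rightarrow> bool \<Rightarrow> int \<Rightarrow> bool" where
  "ext3 a0 a1 a2 m = [a0, a1, a2] ! nat (m mod 3)"

lemma ext3_periodic: "periodic_fun_simple (ext3 a0 a1 a2) 3"
  using periodic_list[of "[a0, a1, a2]"] unfolding ext3_def by simp

lemma ext3_values: "ext3 a0 a1 a2 0 = a0" "ext3 a0 a1 a2 1 = a1" "ext3 a0 a1 a2 2 = a2"
    "ext3 a0 a1 a2 (- 1) = a2"
  unfolding ext3_def by simp_all

lemma elt_code3: "elt n (code3 a0 a1 a2) = flip (ext3 a0 a1 a2)"
  unfolding code3_def
proof (rule elt_per_eq_flip[where d = 3])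
  fix r :: nat assume "r < 3"
  then have "r = 0 \<or> r = 1 \<or> r = 2" by auto
  then show "[blk_code a0 a2, blk_code a1 a0, blk_code a2 a1] ! r
      = blk_code (ext3 a0 a1 a2 (int r)) (ext3 a0 a1 a2 (int r - 1))"
    using ext3_values by auto
qed (use ext3_periodic in simp_all)

lemma ext3_eq:
  assumes "periodic_fun_simple \<alpha> 3"
  shows "\<alpha> = ext3 (\<alpha> 0) (\<alpha> 1) (\<alpha> 2)"
proof (rule periodic_eqI[where p = 3])
  fix k :: nat assume "k < 3"
  then have "k = 0 \<or> k = 1 \<or> k = 2" by auto
  then show "\<alpha> (int k) = ext3 (\<alpha> 0) (\<alpha> 1) (\<alpha> 2) (int k)" using ext3_values by auto
qed (use assms ext3_periodic in simp_all)

lemma T3_eq: "T3 = {code3 a0 a1 a2 | a0 a1 a2. True}"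
proof -
  have "T3 = {code3 False False False, code3 False True False, code3 False False True, code3 True False False,
              code3 False True True, code3 True False True, code3 True True False, code3 True True True}"
    unfolding T3_def code3_def blk_code_def
      using per_replicate(1)[of 0] per_replicate(1)[of 3] by simp
  also have "\<dots> = {code3 a0 a1 a2 | a0 a1 a2. True}"
  proof
    show "{code3 a0 a1 a2 | a0 a1 a2. True} \<subseteq> {code3 False False False, code3 False True False,
        code3 False False True, code3 True False False, code3 False True True, code3 True False True,
        code3 True True False, code3 True True True}"
    proof
      fix t assume "t \<in> {code3 a0 a1 a2 | a0 a1 a2. True}"
      then obtain a0 a1 a2 where "t = code3 a0 a1 a2" by blast
      then show "t \<in> {code3 False False False, code3 False True False, code3 False False True,
          code3 True False False, code3 False True True, code3 True False True, code3 True True False,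
          code3 True True True}"
        by (cases a0; cases a1; cases a2) auto
    qed
  qed blast
  finally show ?thesis .
qed

lemma T3_char: "elt n ` T3 = flip ` {\<alpha>. periodic_fun_simple \<alpha> 3}"
proof
  show "elt n ` T3 \<subseteq> flip ` {\<alpha>. periodic_fun_simple \<alpha> 3}"
    unfolding T3_eq using elt_code3 ext3_periodic by blast
next
  show "flip ` {\<alpha>. periodic_fun_simple \<alpha> 3} \<subseteq> elt n ` T3"
  proof
    fix t assume "t \<in> flip ` {\<alpha>. periodic_fun_simple \<alpha> 3}"
    then obtain \<alpha> where "periodic_fun_simple \<alpha> 3" "t = flip \<alpha>" by blast
    then have "t = elt n (code3 (\<alpha> 0) (\<alpha> 1) (\<alpha> 2))" using elt_code3 ext3_eq by metis
    then show "t \<in> elt n ` T3" unfolding T3_eq by blast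
  qed
qed

definition code4 :: "bool \<Rightarrow> bool \<Rightarrow> bool \<Rightarrow> nat \<Rightarrow> nat" where
  "code4 a0 a1 a2 =
     per [blk_code a0 (a0 \<noteq> (a1 \<noteq> a2)), blk_code a1 a0, blk_code a2 a1, blk_code (a0 \<noteq> (a1 \<noteq> a2)) a2]"

definition ext4 :: "bool \<Rightarrow> bool \<Rightarrow> bool \<Rightarrow> int \<Rightarrow> bool" where
  "ext4 a0 a1 a2 m = [a0, a1, a2, a0 \<noteq> (a1 \<noteq> a2)] ! nat (m mod 4)"

lemma ext4_periodic: "periodic_fun_simple (ext4 a0 a1 a2) 4"
  using periodic_list[of "[a0, a1, a2, a0 \<noteq> (a1 \<noteq> a2)]"] unfolding ext4_def by simp

lemma ext4_values: "ext4 a0 a1 a2 0 = a0" "ext4 a0 a1 a2 1 = a1" "ext4 a0 a1 a2 2 = a2"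
  "ext4 a0 a1 a2 3 = (a0 \<noteq> (a1 \<noteq> a2))" "ext4 a0 a1 a2 (- 1) = (a0 \<noteq> (a1 \<noteq> a2))"
  unfolding ext4_def by simp_all

lemma elt_code4: "elt n (code4 a0 a1 a2) = flip (ext4 a0 a1 a2)"
  unfolding code4_def
proof (rule elt_per_eq_flip[where d = 4])
  fix r :: nat assume "r < 4"
  then have "r = 0 \<or> r = 1 \<or> r = 2 \<or> r = 3" by auto
  then show "[blk_code a0 (a0 \<noteq> (a1 \<noteq> a2)), blk_code a1 a0, blk_code a2 a1, blk_code (a0 \<noteq> (a1 \<noteq> a2)) a2] ! r
      = blk_code (ext4 a0 a1 a2 (int r)) (ext4 a0 a1 a2 (int r - 1))"
    using ext4_values by auto
qed (use ext4_periodic in simp_all)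

lemma ext4_eq:
  assumes "periodic_fun_simple \<alpha> 4" "\<alpha> 3 = (\<alpha> 0 \<noteq> (\<alpha> 1 \<noteq> \<alpha> 2))"
  shows "\<alpha> = ext4 (\<alpha> 0) (\<alpha> 1) (\<alpha> 2)"
proof (rule periodic_eqI[where p = 4])
  fix k :: nat assume "k < 4"
  then have "k = 0 \<or> k = 1 \<or> k = 2 \<or> k = 3" by auto
  then show "\<alpha> (int k) = ext4 (\<alpha> 0) (\<alpha> 1) (\<alpha> 2) (int k)" using ext4_values assms(2) by auto
qed (use assms(1) ext4_periodic in simp_all)

lemma T4_eq: "T4 = {code4 a0 a1 a2 | a0 a1 a2. True}"
proof -
  have "T4 = {code4 False False False, code4 False True True, code4 False False True, code4 True False False,
              code4 True True False, code4 False True False, code4 True False True, code4 True True True}"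
    unfolding T4_def code4_def blk_code_def
    using per_replicate(2)[of 0] per_replicate(2)[of 3] per_twice[of 2 1] per_twice[of 1 2] by simp
  also have "\<dots> = {code4 a0 a1 a2 | a0 a1 a2. True}"
  proof
    show "{code4 a0 a1 a2 | a0 a1 a2. True} \<subseteq> {code4 False False False, code4 False True True,
        code4 False False True, code4 True False False, code4 True True False, code4 False True False,
        code4 True False True, code4 True True True}"
    proof
      fix t assume "t \<in> {code4 a0 a1 a2 | a0 a1 a2. True}"
      then obtain a0 a1 a2 where "t = code4 a0 a1 a2" by blast
      then show "t \<in> {code4 False False False, code4 False True True, code4 False False True,
          code4 True False False, code4 True True False, code4 False True False, code4 True False True,
          code4 True True True}"
        by (cases a0; cases a1; cases a2) auto
    qed
  qed blast
  finally show ?thesis .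
qed

lemma T4_char:
  "elt n ` T4 = flip ` {\<alpha>. periodic_fun_simple \<alpha> 4 \<and> \<alpha> 3 = (\<alpha> 0 \<noteq> (\<alpha> 1 \<noteq> \<alpha> 2))}"
proof
  show "elt n ` T4 \<subseteq> flip ` {\<alpha>. periodic_fun_simple \<alpha> 4 \<and> \<alpha> 3 = (\<alpha> 0 \<noteq> (\<alpha> 1 \<noteq> \<alpha> 2))}"
    unfolding T4_eq using elt_code4 ext4_periodic ext4_values by fastforce
next
  show "flip ` {\<alpha>. periodic_fun_simple \<alpha> 4 \<and> \<alpha> 3 = (\<alpha> 0 \<noteq> (\<alpha> 1 \<noteq> \<alpha> 2))} \<subseteq> elt n ` T4"
  proof
    fix t assume "t \<in> flip ` {\<alpha>. periodic_fun_simple \<alpha> 4 \<and> \<alpha> 3 = (\<alpha> 0 \<noteq> (\<alpha> 1 \<noteq> \<alpha> 2))}"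
    then obtain \<alpha> where "periodic_fun_simple \<alpha> 4" "\<alpha> 3 = (\<alpha> 0 \<noteq> (\<alpha> 1 \<noteq> \<alpha> 2))" "t = flip \<alpha>"
      by blast
    then have "t = elt n (code4 (\<alpha> 0) (\<alpha> 1) (\<alpha> 2))" using elt_code4 ext4_eq by metis
    then show "t \<in> elt n ` T4" unfolding T4_eq by blast
  qed
qed

end

section \<open>The automorphisms of the map in \<open>N\<close>\<close>

locale rw_map = rw_blocks n + map_2_01 "rw_verts (2 * n)" "rw_edges (2 * n) (n + 2) (n + 1)" F
  for n :: nat and F :: "(bool \<times> nat) set set set set"
begin

lemma aut_graph_aut:
  assumes g: "g \<in> Aut"
  shows "graph_aut g" and "\<And>x. x \<notin> Verts \<Longrightarrow> g x = x"
proof -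
  have b: "bij_betw g Verts Verts" and ie: "img_edge g ` Edges = Edges"
    using g unfolding map_aut_def by auto
  show "\<And>x. x \<notin> Verts \<Longrightarrow> g x = x" using g unfolding map_aut_def by auto
  have inj: "inj_on g Verts" using b bij_betw_def by blast
  have gv: "\<And>x. x \<in> Verts \<Longrightarrow> g x \<in> Verts" using b bij_betwE by blast
  show "graph_aut g" unfolding graph_aut_def
  proof (intro conjI b ballI)
    fix x y assume x: "x \<in> Verts" and y: "y \<in> Verts"
    show "adj (g x) (g y) = adj x y"
    proof
      assume "adj x y"
      then have "img_edge g {x, y} \<in> Edges" using ie unfolding adj_def by blast
      then show "adj (g x) (g y)" unfolding adj_def img_edge_def by simp
    next
      assume "adj (g x) (g y)"
      then have "{g x, g y} \<in> img_edge g ` Edges" using ie unfolding adj_def by simp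
      then obtain e where e: "e \<in> Edges" "img_edge g e = {g x, g y}" by blast
      obtain p q where pq: "e = {p, q}" "p \<in> Verts" "q \<in> Verts"
        using edge_doubleton[OF e(1)] by blast
      have "{g p, g q} = {g x, g y}" using e(2) pq unfolding img_edge_def by simp
      then have "{p, q} = {x, y}" using inj pq x y unfolding inj_on_def doubleton_eq_iff by metis
      then show "adj x y" using e pq unfolding adj_def by simp
    qed
  qed
qed

definition aut_flips :: "(int \<Rightarrow> bool) set" where "aut_flips = {\<alpha>. periodic \<alpha> \<and> flip \<alpha> \<in> Aut}"

lemma aut_flips_xor:
  assumes a: "\<alpha> \<in> aut_flips" and c: "\<gamma> \<in> aut_flips"
  shows "(\<lambda>m. \<alpha> m \<noteq> \<gamma> m) \<in> aut_flips"
proof -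
  have p: "periodic \<alpha>" "periodic \<gamma>" and g: "flip \<alpha> \<in> Aut" "flip \<gamma> \<in> Aut"
    using a c unfolding aut_flips_def by auto
  have "periodic (\<lambda>m. \<alpha> m \<noteq> \<gamma> m)" using p unfolding periodic_fun_simple_def by simp
  moreover have "flip (\<lambda>m. \<alpha> m \<noteq> \<gamma> m) \<in> Aut" using aut_comp[OF g] flip_comp[of \<alpha> \<gamma>] by simp
  ultimately show ?thesis unfolding aut_flips_def by simp
qed

lemma conj_flip_in_Aut:
  assumes g: "g \<in> Aut" and a: "\<alpha> \<in> aut_flips" and e: "g \<circ> flip \<alpha> = flip \<alpha>' \<circ> g"
  shows "flip \<alpha>' \<in> Aut"
proof -
  have "flip \<alpha>' = flip \<alpha>' \<circ> (g \<circ> aut_inv g)" using aut_inv(2)[OF g] by simp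
  also have "\<dots> = (g \<circ> flip \<alpha>) \<circ> aut_inv g" using e by (simp add: comp_assoc)
  finally have "flip \<alpha>' = g \<circ> flip \<alpha> \<circ> aut_inv g" by (simp add: comp_assoc)
  then show ?thesis using aut_comp g aut_inv(1)[OF g] a unfolding aut_flips_def by auto
qed

lemma aut_flips_reflect_by:
  assumes g: "g \<in> Aut" "reflecting g" and a: "\<alpha> \<in> aut_flips"
  shows "(\<lambda>m. \<alpha> (int (blk_map g 0) - m - 1)) \<in> aut_flips"
proof -
  let ?c = "int (blk_map g 0)"
  have p: "periodic \<alpha>" using a unfolding aut_flips_def by simp
  have "flip (\<lambda>m. \<alpha> (?c - m - 1)) \<in> Aut"
    using reflecting_conj_flip[OF aut_graph_aut(1)[OF g(1)] g(2) aut_graph_aut(2)[OF g(1)] p]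
    by (rule conj_flip_in_Aut[OF g(1) a])
  moreover have "periodic (\<lambda>m. \<alpha> (?c - m - 1))"
  proof (rule periodic_fun_simple.intro)
    fix m
    show "\<alpha> (?c - (m + int n) - 1) = \<alpha> (?c - m - 1)"
      using periodic_minus[OF p, of "?c - m - 1"] by (simp add: algebra_simps)
  qed
  ultimately show ?thesis unfolding aut_flips_def by simp
qed

lemma aut_flips_reflect:
  assumes a: "\<alpha> \<in> aut_flips"
  shows "(\<lambda>m. \<alpha> (- m)) \<in> aut_flips"
proof -
  let ?x = "vtx 0 False False" and ?y = "vtx 1 False False"
  have y: "?y \<in> Verts" "blk_of ?y = 1" using n_ge_5 vtx_in_Verts blk_of_vtx by auto
  have e: "{?x, ?y} \<in> Edges" using vtx_edge[of 0 False False False] n_ge_5 nxt_0 by simp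
  obtain g where g: "g \<in> Aut" "g ?x = ?y" "g ?y = ?x" by (rule aut_reverses_edge[OF e])
  have ga: "graph_aut g" using aut_graph_aut[OF g(1)] by blast
  have b0: "blk_map g 0 = 1" unfolding blk_map_def using g y by simp
  have b1: "blk_map g 1 = 0" using blk_of_graph_aut[OF ga y(1)] g vtx0_coords y by simp
  have "\<not> rotating g"
  proof
    assume "rotating g"
    then have "blk_map g (nxt 0) = nxt (blk_map g 0)" unfolding rotating_def using n_ge_5 by simp
    then show False using b0 b1 nxt_0 nxt_Suc[of 1] n_ge_5 by simp
  qed
  then have "reflecting g" using rotating_or_reflecting[OF ga] by simp
  from aut_flips_reflect_by[OF g(1) this a] show ?thesis using b0 by simp
qed

lemma aut_flips_reflect':
  assumes a: "\<alpha> \<in> aut_flips"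
  shows "(\<lambda>m. \<alpha> (- m - 1)) \<in> aut_flips"
proof -
  let ?x = "vtx 0 False False" and ?y = "vtx 1 False False" and ?y' = "vtx (n - 1) False False"
  have y: "?y \<in> Verts" "blk_of ?y = 1" using n_ge_5 vtx_in_Verts blk_of_vtx by auto
  have y': "blk_of ?y' = n - 1" using n_ge_5 blk_of_vtx by auto
  have e: "{?x, ?y} \<in> Edges" using vtx_edge[of 0 False False False] n_ge_5 nxt_0 by simp
  have e': "{?x, ?y'} \<in> Edges"
    using vtx_edge[of "n - 1" False False False] n_ge_5 nxt_last by (simp add: insert_commute)
  obtain g where g: "g \<in> Aut" "g ?x = ?x" "g ?y = ?y'"
    by (rule aut_vertex_stabiliser_transitive[OF vtx0_coords(1) e e'])
  have ga: "graph_aut g" using aut_graph_aut[OF g(1)] by blast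
  have b0: "blk_map g 0 = 0" unfolding blk_map_def using g vtx0_coords by simp
  have b1: "blk_map g 1 = n - 1" using blk_of_graph_aut[OF ga y(1)] g y y' by simp
  have "\<not> rotating g"
  proof
    assume "rotating g"
    then have "blk_map g (nxt 0) = nxt (blk_map g 0)" unfolding rotating_def using n_ge_5 by simp
    then show False using b0 b1 nxt_0 n_ge_5 by simp
  qed
  then have "reflecting g" using rotating_or_reflecting[OF ga] by simp
  from aut_flips_reflect_by[OF g(1) this a] show ?thesis using b0 by simp
qed

lemma aut_flips_generator: obtains \<beta> where "\<beta> \<in> aut_flips" "\<not> \<beta> (-1)" "\<not> \<beta> 0" "\<beta> 1"
proof -
  let ?x = "vtx 0 False False" and ?y = "vtx 1 False False" and ?y' = "vtx 1 True False"
  have y: "?y \<in> Verts" "blk_of ?y = 1" "nbit ?y = False" "pbit ?y = False"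
    using n_ge_5 vtx_in_Verts blk_of_vtx nbit_vtx pbit_vtx by auto
  have y': "?y' \<in> Verts" "blk_of ?y' = 1" "nbit ?y' = True" "pbit ?y' = False"
    using n_ge_5 vtx_in_Verts blk_of_vtx nbit_vtx pbit_vtx by auto
  have e: "{?x, ?y} \<in> Edges" using vtx_edge[of 0 False False False] n_ge_5 nxt_0 by simp
  have e': "{?x, ?y'} \<in> Edges" using vtx_edge[of 0 False False True] n_ge_5 nxt_0 by simp
  obtain g where g: "g \<in> Aut" "g ?x = ?x" "g ?y = ?y'"
    by (rule aut_vertex_stabiliser_transitive[OF vtx0_coords(1) e e'])
  have ga: "graph_aut g" and out: "\<And>x. x \<notin> Verts \<Longrightarrow> g x = x" using aut_graph_aut[OF g(1)] by auto
  have b0: "blk_map g 0 = 0" unfolding blk_map_def using g vtx0_coords by simp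
  have b1: "blk_map g 1 = 1" using blk_of_graph_aut[OF ga y(1)] g y y' by simp
  have "\<not> reflecting g"
  proof
    assume "reflecting g"
    then have "blk_map g (nxt 0) = prv (blk_map g 0)" unfolding reflecting_def using n_ge_5 by simp
    then show False using b0 b1 nxt_0 prv_0 n_ge_5 by simp
  qed
  then have pr: "rotating g" using rotating_or_reflecting[OF ga] by simp
  define \<beta> where "\<beta> = (\<lambda>m. nflip_of g (nat (m mod int n)))"
  have gb: "g = flip \<beta>" unfolding \<beta>_def by (rule rotating_fixing_blk0_eq_flip[OF ga pr b0 out])
  have pb: "periodic \<beta>" unfolding periodic_fun_simple_def \<beta>_def by simp
  have "flip \<beta> ?x = ?x" using g gb by simp
  then have "nbit (flip \<beta> ?x) = False" "pbit (flip \<beta> ?x) = False" using vtx0_coords by simp_all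
  then have h1: "\<not> \<beta> 0" "\<not> \<beta> (-1)"
    using flip_coords[OF vtx0_coords(1), of \<beta>] vtx0_coords by simp_all
  have "flip \<beta> ?y = ?y'" using g gb by simp
  then have "nbit (flip \<beta> ?y) = True" using y' by simp
  then have h2: "\<beta> 1" using flip_coords[OF y(1), of \<beta>] y by simp
  show ?thesis by (rule that[of \<beta>]) (use h1 h2 g(1) gb pb in \<open>auto simp: aut_flips_def\<close>)
qed

lemma flip_fixes_vtx:
  assumes "k < n" "\<not> \<alpha> (int k)" "\<not> \<alpha> (int k - 1)"
  shows "flip \<alpha> (vtx k False False) = vtx k False False"
  using assms vtx_blk_coords[OF assms(1)] flip_coords[OF vtx_in_Verts[OF assms(1)]]
  by (intro coords_eqI flip_in_Verts vtx_in_Verts) simp_all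

lemma aut_flips_rigid:
  assumes a: "\<alpha> \<in> aut_flips" and z: "\<not> \<alpha> (k - 1)" "\<not> \<alpha> k" "\<not> \<alpha> (k + 1)"
  shows "\<not> \<alpha> m"
proof -
  have p: "periodic \<alpha>" and g: "flip \<alpha> \<in> Aut" using a unfolding aut_flips_def by auto
  have mod_n: "j mod int n = int (nat (j mod int n))" "nat (j mod int n) < n" for j
    using n_ge_5 by (auto simp: nat_less_iff)
  define k0 where "k0 = nat (k mod int n)"
  have k0: "k0 < n" "int k0 mod int n = k mod int n" unfolding k0_def using mod_n[of k] by auto
  have "(int k0 - 1) mod int n = (k - 1) mod int n" "(int k0 + 1) mod int n = (k + 1) mod int n"
    using k0(2) by (auto intro: mod_diff_cong mod_add_cong)
  then have "\<alpha> (int k0) = \<alpha> k" "\<alpha> (int k0 - 1) = \<alpha> (k - 1)"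
    "\<alpha> (int (nxt k0)) = \<alpha> (k + 1)" "\<alpha> (int (nxt k0) - 1) = \<alpha> k"
    using k0(2) nxt_mod_int[of k0]
    by (auto intro!: periodic_cong[OF p] simp: mod_diff_left_eq mod_add_left_eq)
  then have "flip \<alpha> (vtx k0 False False) = vtx k0 False False"
    "flip \<alpha> (vtx (nxt k0) False False) = vtx (nxt k0) False False"
    using flip_fixes_vtx k0(1) nxt_lt z by simp_all
  moreover have "{vtx k0 False False, vtx (nxt k0) False False} \<in> Edges" by (rule vtx_edge[OF k0(1)])
  moreover define m0 where "m0 = nat (m mod int n)"
  have m0: "m0 < n" "int m0 mod int n = m mod int n" unfolding m0_def using mod_n[of m] by auto
  ultimately have "flip \<alpha> (vtx m0 False False) = vtx m0 False False"
    using aut_fixing_edge_fixes_vertices[OF g] vtx_in_Verts by blast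
  then have "\<not> \<alpha> (int m0)"
    using flip_coords(2)[OF vtx_in_Verts[OF m0(1), of False False], of \<alpha>] vtx_blk_coords[OF m0(1)]
    by simp
  then show ?thesis using periodic_cong[OF p m0(2)] by simp
qed

lemma Ngrp_inter_Aut: "Ngrp n \<inter> Aut = flip ` aut_flips"
  unfolding Ngrp_eq aut_flips_def by blast

lemma aut_flips_binary_pattern_group: "binary_pattern_group n aut_flips"
proof (rule binary_pattern_group.intro)
  fix \<alpha> assume "\<alpha> \<in> aut_flips"
  then show "periodic \<alpha>" unfolding aut_flips_def by blast
next
  fix \<alpha> \<gamma> assume "\<alpha> \<in> aut_flips" "\<gamma> \<in> aut_flips"
  then show "(\<lambda>m. \<alpha> m \<noteq> \<gamma> m) \<in> aut_flips" by (rule aut_flips_xor)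
next
  fix \<alpha> k m assume "\<alpha> \<in> aut_flips" "\<not> \<alpha> (k - 1)" "\<not> \<alpha> k" "\<not> \<alpha> (k + 1)"
  then show "\<not> \<alpha> m" by (rule aut_flips_rigid)
next
  fix \<alpha> assume "\<alpha> \<in> aut_flips"
  then show "(\<lambda>m. \<alpha> (- m)) \<in> aut_flips" by (rule aut_flips_reflect)
next
  fix \<alpha> assume "\<alpha> \<in> aut_flips"
  then show "(\<lambda>m. \<alpha> (- m - 1)) \<in> aut_flips" by (rule aut_flips_reflect')
next
  show "\<exists>\<beta>\<in>aut_flips. \<not> \<beta> (- 1) \<and> \<not> \<beta> 0 \<and> \<beta> 1" using aut_flips_generator by metis
qed

lemma Ngrp_inter_Aut_cases:
  "(Ngrp n \<inter> Aut = elt n ` T3 \<and> 3 dvd n) \<or> (Ngrp n \<inter> Aut = elt n ` T4 \<and> 4 dvd n)"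
  using binary_pattern_group.classification[OF aut_flips_binary_pattern_group]
  unfolding Ngrp_inter_Aut T3_char T4_char by auto

end

theorem lemma3p4:
  fixes n :: nat and F :: "(bool \<times> nat) set set set set"
  assumes "n \<ge> 5"
    and "class_2_01 (rw_verts (2 * n)) (rw_edges (2 * n) (n + 2) (n + 1)) F"
  shows "((Ngrp n \<inter> map_aut (rw_verts (2 * n)) (rw_edges (2 * n) (n + 2) (n + 1)) F
             = elt n ` T3 \<and> 3 dvd n)
         \<or> (Ngrp n \<inter> map_aut (rw_verts (2 * n)) (rw_edges (2 * n) (n + 2) (n + 1)) F
             = elt n ` T4 \<and> 4 dvd n))
         \<and> gcd n 12 \<noteq> 1"
proof -
  interpret rw_map n F by unfold_locales (fact assms)+
  have "3 dvd n \<or> 4 dvd n" using Ngrp_inter_Aut_cases by blast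
  then have dvd_gcd: "3 dvd gcd n 12 \<or> 4 dvd gcd n 12" by (auto intro: gcd_greatest)
  have "gcd n 12 \<noteq> 1"
  proof
    assume "gcd n 12 = 1"
    with dvd_gcd have "(3 :: nat) dvd 1 \<or> (4 :: nat) dvd 1" by (simp only:)
    then show False by simp
  qed
  with Ngrp_inter_Aut_cases show ?thesis by blast
qed

end
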